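(* Assume the index set is discrete: $\mathcal W=\mathcal W_1\times\cdots\times\mathcal W_d$ with each $\mathcal W_k$ a countable subset of $\mathcal B_k$. For each $k$ let $Q^{(k)}$ be a fixed probability distribution on $\mathcal W_1\times\cdots\times\mathcal W_k$ and let $\gamma_k>0$. Let $C=LMR\sqrt2$ and let $P^\star_{W|S}$ be a conditional distribution (with values in $\mathcal W$) attaining $$\min_{P_{W|S}}\Big\{\mathbb E[L_S(W)]+\frac{C}{\sqrt n}\sum_{k=1}^d\beta_k\gamma_k\,D\big(P_{W_1\dots W_k|S}\,\big\|\,Q^{(k)}\,\big|\,P_S\big)\Big\}.$$ Given $\mu$, let $\widehat w=(\widehat w_1,\dots,\widehat w_d)\in\mathcal W$ achieve the minimum of $L_\mu$ over $\mathcal W$. Then $$\mathrm{risk}(\mu,P^\star_{W|S})\le\inf_{w\in\mathcal W}L_\mu(w)+\frac{C}{\sqrt n}\sum_{k=1}^d\beta_k\Big(\gamma_k\log\frac{1}{Q^{(k)}(\widehat w_1,\dots,\widehat w_k)}+\frac1{4\gamma_k}\Big).$$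
   Context: Setting: $d\ge2$, positive integers $m,\delta_1,\dots,\delta_d$, $\delta_0=m$, $R>0$, $\mathcal X=\{x\in\mathbb R^m:|x|_2\le R\}$, $\mathcal Y$ a set, $\mathsf Z=\mathcal X\times\mathcal Y$. For $1\le j\le d$ fix $M_j\in\mathbb R^{\delta_j\times\delta_{j-1}}$ with spectral norm $\|M_j\|_2>0$ and $\alpha_j>0$, and let $\mathcal B_j=\{\mathbf W\in\mathbb R^{\delta_j\times\delta_{j-1}}:\|\mathbf W-M_j\|_2\le\alpha_j\|M_j\|_2\}$. $\phi$ is a $1$-Lipschitz (Euclidean norm) activation with $\phi(0)=0$, $\phi_o$ is the identity or soft-max, and for $w=(\mathbf W_1,\dots,\mathbf W_d)\in\mathcal B_1\times\cdots\times\mathcal B_d$, $h_w(x)=\phi_o(\mathbf W_d\,\phi(\mathbf W_{d-1}\cdots\phi(\mathbf W_1x)\cdots))$. $M=\prod_j\|M_j\|_2$, $\beta_k=\alpha_k\exp(\sum_{i<k}\alpha_i)$. The loss $\ell:(\mathcal B_1\times\cdots\times\mathcal B_d)\times\mathsf Z\to[0,\infty)$ satisfies $|\ell(w,z)-\ell(w',z)|\le L|h_w(x)-h_{w'}(x)|_2$ for some $L>0$, all $w,w'$ and $z=(x,y)$. $S=(Z_1,\dots,Z_n)$ is i.i.d. from $\mu$ on $\mathsf Z$, $P_S=\mu^{\otimes n}$; an algorithm is a conditional distribution $P_{W|S}$ of $W=(W_1,\dots,W_d)$ given $S$, and $P_{W_1\dots W_k|S}$ is the corresponding conditional law of the first $k$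 components. $L_\mu(w)=\mathbb E_{Z\sim\mu}\ell(w,Z)$, $L_S(w)=\frac1n\sum_i\ell(w,Z_i)$, $\mathrm{risk}(\mu,P_{W|S})=\mathbb E[L_\mu(W)]$ under the joint law $\mu^{\otimes n}P_{W|S}$. Conditional relative entropy: $D(P_{Y|X}\|Q|P_X)=\int D(P_{Y|X=x}\|Q)\,\mathrm dP_X(x)$, where $D$ is relative entropy (KL divergence, natural log). *)

theory Defs
  imports "HOL-Probability.Probability"
begin

text \<open>Vectors in R^k are represented as functions nat => real of which only the
first k coordinates matter; matrices in R^(r x c) as nat => nat => real, zero outside
the index range r x c. A weight tuple (W_1,...,W_d) is a function nat => matrix,
with layer j stored at index j (1 <= j <= d) and the zero matrix elsewhere.\<close>

type_synonym vec = "nat \<Rightarrow> real"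
type_synonym mat = "nat \<Rightarrow> nat \<Rightarrow> real"
type_synonym weights = "nat \<Rightarrow> mat"

definition nn_vnorm :: "nat \<Rightarrow> vec \<Rightarrow> real" where
  "nn_vnorm k x = sqrt (\<Sum>i<k. (x i)\<^sup>2)"

definition nn_mvmul :: "nat \<Rightarrow> nat \<Rightarrow> mat \<Rightarrow> vec \<Rightarrow> vec" where
  "nn_mvmul r c A x = (\<lambda>i. if i < r then (\<Sum>j<c. A i j * x j) else 0)"

definition nn_mats :: "nat \<Rightarrow> nat \<Rightarrow> mat set" where
  "nn_mats r c = {A. \<forall>i j. \<not> (i < r \<and> j < c) \<longrightarrow> A i j = 0}"

definition nn_specnorm :: "nat \<Rightarrow> nat \<Rightarrow> mat \<Rightarrow> real" where
  "nn_specnorm r c A = (SUP x\<in>{x. nn_vnorm c x \<le> 1}. nn_vnorm r (nn_mvmul r c A x))"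

definition nn_ball :: "nat \<Rightarrow> nat \<Rightarrow> mat \<Rightarrow> real \<Rightarrow> mat set" where
  "nn_ball r c Mj a = {W \<in> nn_mats r c. nn_specnorm r c (\<lambda>i j. W i j - Mj i j) \<le> a * nn_specnorm r c Mj}"

definition nn_tuples :: "nat \<Rightarrow> (nat \<Rightarrow> mat set) \<Rightarrow> weights set" where
  "nn_tuples d Ws = {w. (\<forall>k\<in>{1..d}. w k \<in> Ws k) \<and> (\<forall>j. j \<notin> {1..d} \<longrightarrow> w j = (\<lambda>_ _. 0))}"

definition nn_prefix :: "nat \<Rightarrow> weights \<Rightarrow> weights" where
  "nn_prefix k w = (\<lambda>j. if j \<in> {1..k} then w j else (\<lambda>_ _. 0))"

fun nn_hidden :: "(nat \<Rightarrow> nat) \<Rightarrow> (nat \<Rightarrow> vec \<Rightarrow> vec) \<Rightarrow> weights \<Rightarrow> vec \<Rightarrow> nat \<Rightarrow> vec" where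
  "nn_hidden \<delta> \<phi> w x 0 = x"
| "nn_hidden \<delta> \<phi> w x (Suc k) =
     \<phi> (\<delta> (Suc k)) (nn_mvmul (\<delta> (Suc k)) (\<delta> k) (w (Suc k)) (nn_hidden \<delta> \<phi> w x k))"

definition nn_net :: "nat \<Rightarrow> (nat \<Rightarrow> nat) \<Rightarrow> (nat \<Rightarrow> vec \<Rightarrow> vec) \<Rightarrow> (nat \<Rightarrow> vec \<Rightarrow> vec)
    \<Rightarrow> weights \<Rightarrow> vec \<Rightarrow> vec" where
  "nn_net d \<delta> \<phi> \<phi>o w x =
     \<phi>o (\<delta> d) (nn_mvmul (\<delta> d) (\<delta> (d - 1)) (w d) (nn_hidden \<delta> \<phi> w x (d - 1)))"

definition nn_softmax :: "nat \<Rightarrow> vec \<Rightarrow> vec" where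
  "nn_softmax k x = (\<lambda>i. if i < k then exp (x i) / (\<Sum>j<k. exp (x j)) else 0)"

text \<open>Relative entropy (natural log) between discrete distributions, with value +infinity
allowed. Written as the sum over x of q(x) f(p(x)/q(x)) with f(t) = t ln t - t + 1 >= 0,
i.e. sum of p ln(p/q) - p + q, which equals sum of p ln(p/q) since both pmfs have mass 1;
it is +infinity if p is not absolutely continuous w.r.t. q.\<close>
definition KL_pmf :: "'a pmf \<Rightarrow> 'a pmf \<Rightarrow> ennreal" where
  "KL_pmf p q = (\<integral>\<^sup>+ x. (if pmf p x = 0 then ennreal (pmf q x)
       else if pmf q x = 0 then \<infinity>
       else ennreal (pmf p x * ln (pmf p x / pmf q x) - pmf p x + pmf q x)) \<partial>count_space UNIV)"

definition neglog :: "real \<Rightarrow> ennreal" where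
  "neglog q = (if q = 0 then \<infinity> else ennreal (- ln q))"

definition nn_beta :: "(nat \<Rightarrow> real) \<Rightarrow> nat \<Rightarrow> real" where
  "nn_beta \<alpha> k = \<alpha> k * exp (\<Sum>i\<in>{1..<k}. \<alpha> i)"

abbreviation sample_measure :: "'z measure \<Rightarrow> nat \<Rightarrow> (nat \<Rightarrow> 'z) measure" where
  "sample_measure \<mu> n \<equiv> PiM {..<n} (\<lambda>_. \<mu>)"

definition emp_loss :: "(weights \<Rightarrow> 'z \<Rightarrow> real) \<Rightarrow> nat \<Rightarrow> weights \<Rightarrow> (nat \<Rightarrow> 'z) \<Rightarrow> real" where
  "emp_loss lf n w s = (\<Sum>i<n. lf w (s i)) / real n"

definition pop_loss :: "(weights \<Rightarrow> 'z \<Rightarrow> real) \<Rightarrow> 'z measure \<Rightarrow> weights \<Rightarrow> ennreal" where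
  "pop_loss lf \<mu> w = (\<integral>\<^sup>+ z. ennreal (lf w z) \<partial>\<mu>)"

text \<open>Algorithms: Markov kernels from samples to (discrete) distributions on W.\<close>
definition admissible :: "nat \<Rightarrow> (nat \<Rightarrow> mat set) \<Rightarrow> 'z measure \<Rightarrow> nat
    \<Rightarrow> ((nat \<Rightarrow> 'z) \<Rightarrow> weights pmf) \<Rightarrow> bool" where
  "admissible d Ws \<mu> n P \<longleftrightarrow>
     (\<forall>s\<in>space (sample_measure \<mu> n). set_pmf (P s) \<subseteq> nn_tuples d Ws) \<and>
     (\<forall>w. (\<lambda>s. ennreal (pmf (P s) w)) \<in> borel_measurable (sample_measure \<mu> n))"

definition exp_emp_loss :: "(weights \<Rightarrow> 'z \<Rightarrow> real) \<Rightarrow> 'z measure \<Rightarrow> nat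
    \<Rightarrow> ((nat \<Rightarrow> 'z) \<Rightarrow> weights pmf) \<Rightarrow> ennreal" where
  "exp_emp_loss lf \<mu> n P = (\<integral>\<^sup>+ s. (\<integral>\<^sup>+ w. ennreal (emp_loss lf n w s) \<partial>measure_pmf (P s))
       \<partial>sample_measure \<mu> n)"

definition cond_KL :: "'z measure \<Rightarrow> nat \<Rightarrow> nat \<Rightarrow> ((nat \<Rightarrow> 'z) \<Rightarrow> weights pmf)
    \<Rightarrow> weights pmf \<Rightarrow> ennreal" where
  "cond_KL \<mu> n k P Q = (\<integral>\<^sup>+ s. KL_pmf (map_pmf (nn_prefix k) (P s)) Q \<partial>sample_measure \<mu> n)"

definition risk :: "(weights \<Rightarrow> 'z \<Rightarrow> real) \<Rightarrow> 'z measure \<Rightarrow> nat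
    \<Rightarrow> ((nat \<Rightarrow> 'z) \<Rightarrow> weights pmf) \<Rightarrow> ennreal" where
  "risk lf \<mu> n P = (\<integral>\<^sup>+ s. (\<integral>\<^sup>+ w. pop_loss lf \<mu> w \<partial>measure_pmf (P s)) \<partial>sample_measure \<mu> n)"

definition gibbs_objective :: "real \<Rightarrow> nat \<Rightarrow> (nat \<Rightarrow> real) \<Rightarrow> (nat \<Rightarrow> real)
    \<Rightarrow> (nat \<Rightarrow> weights pmf) \<Rightarrow> (weights \<Rightarrow> 'z \<Rightarrow> real) \<Rightarrow> 'z measure \<Rightarrow> nat
    \<Rightarrow> ((nat \<Rightarrow> 'z) \<Rightarrow> weights pmf) \<Rightarrow> ennreal" where
  "gibbs_objective C d \<alpha> \<gamma> Q lf \<mu> n P =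
     exp_emp_loss lf \<mu> n P +
     ennreal (C / sqrt (real n)) *
       (\<Sum>k\<in>{1..d}. ennreal (nn_beta \<alpha> k * \<gamma> k) * cond_KL \<mu> n k P (Q k))"

end

theory Submission
  imports Defs
begin

text \<open>Let \<open>w\<^sup>(\<^sup>k\<^sup>)\<close> take its first \<open>k\<close> layers from \<open>w\<close> and the remaining ones from the
  centres \<open>M\<^sub>j\<close>, so that \<open>w\<^sup>(\<^sup>0\<^sup>)\<close> is the tuple of centres and \<open>w\<^sup>(\<^sup>d\<^sup>) = w\<close>.
  Replacing the centre of layer \<open>k\<close> by \<open>w\<^sub>k\<close> moves the output of the network by at most
  \<open>\<beta>\<^sub>k M R\<close>, because the layers below \<open>k\<close> have gains \<open>(1 + \<alpha>\<^sub>j) \<parallel>M\<^sub>j\<parallel> \<le> exp \<alpha>\<^sub>j \<parallel>M\<^sub>j\<parallel>\<close>.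
  So the loss increments between \<open>w\<^sup>(\<^sup>k\<^sup>-\<^sup>1\<^sup>)\<close> and \<open>w\<^sup>(\<^sup>k\<^sup>)\<close> are bounded by
  \<open>a\<^sub>k = L \<beta>\<^sub>k M R\<close> and depend on the first \<open>k\<close> layers only, and by telescoping
  \<open>L\<^sub>\<mu>(w) - L\<^sub>S(w)\<close> is the same difference for the centres plus the sum of the
  generalisation gaps of the increments.

  By Hoeffding's lemma the exponential moments of the \<open>k\<close>-th gap are at most
  \<open>exp (\<lambda>\<^sup>2 a\<^sub>k\<^sup>2 / 2n)\<close>, so a change of measure against the prior \<open>Q\<^sup>(\<^sup>k\<^sup>)\<close> bounds the
  posterior average of the gap by \<open>1/\<lambda>\<close> times the conditional relative entropy of the law of
  the first \<open>k\<close> layers to \<open>Q\<^sup>(\<^sup>k\<^sup>)\<close>, plus \<open>\<lambda> a\<^sub>k\<^sup>2 / 2n\<close>. For \<open>\<lambda> = \<surd>n / (C \<beta>\<^sub>k \<gamma>\<^sub>k)\<close>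
  these bounds add up to the regulariser of the objective plus \<open>C/\<surd>n \<Sum>\<^sub>k \<beta>\<^sub>k / 4\<gamma>\<^sub>k\<close>.
  Hence the risk of the minimiser is at most its objective plus that term, and its objective is
  at most the objective of the point mass at \<open>\<^bold>w\<close>, which is
  \<open>L\<^sub>\<mu>(\<^bold>w) + C/\<surd>n \<Sum>\<^sub>k \<beta>\<^sub>k \<gamma>\<^sub>k log (1 / Q\<^sup>(\<^sup>k\<^sup>)(\<^bold>w\<^sub>1, \<dots>, \<^bold>w\<^sub>k))\<close>.\<close>

section \<open>Norms of truncated vectors and matrices\<close>

lemma nn_vnorm_eq_L2_set: "nn_vnorm k x = L2_set x {..<k}"
  by (simp add: nn_vnorm_def L2_set_def)

lemma nn_vnorm_nonneg: "0 \<le> nn_vnorm k x"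
  by (simp add: nn_vnorm_eq_L2_set)

lemma nn_vnorm_eq_0_iff: "nn_vnorm k x = 0 \<longleftrightarrow> (\<forall>i<k. x i = 0)"
  by (auto simp: nn_vnorm_eq_L2_set L2_set_eq_0_iff)

lemma nn_vnorm_zero [simp]: "nn_vnorm k (\<lambda>_. 0) = 0"
  by (simp add: nn_vnorm_eq_0_iff)

lemma nn_vnorm_cong: "(\<And>i. i < k \<Longrightarrow> x i = y i) \<Longrightarrow> nn_vnorm k x = nn_vnorm k y"
  unfolding nn_vnorm_def by (intro arg_cong[where f=sqrt] sum.cong) auto

lemma nn_vnorm_add_le: "nn_vnorm k (\<lambda>i. x i + y i) \<le> nn_vnorm k x + nn_vnorm k y"
  unfolding nn_vnorm_eq_L2_set by (rule L2_set_triangle_ineq)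

lemma nn_vnorm_scale: "nn_vnorm k (\<lambda>i. c * x i) = \<bar>c\<bar> * nn_vnorm k x"
  unfolding nn_vnorm_def
  by (simp add: power_mult_distrib sum_distrib_left[symmetric] real_sqrt_mult)

lemma nn_vnorm_sq: "(nn_vnorm k x)\<^sup>2 = (\<Sum>i<k. (x i)\<^sup>2)"
  by (simp add: nn_vnorm_def sum_nonneg)

lemma nn_mvmul_diff_mat:
  "nn_mvmul r c A x i - nn_mvmul r c B x i = nn_mvmul r c (\<lambda>i j. A i j - B i j) x i"
  by (simp add: nn_mvmul_def sum_subtractf[symmetric] left_diff_distrib)

lemma nn_mvmul_diff_vec:
  "nn_mvmul r c A x i - nn_mvmul r c A y i = nn_mvmul r c A (\<lambda>j. x j - y j) i"
  by (simp add: nn_mvmul_def sum_subtractf[symmetric] right_diff_distrib)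

lemma nn_mvmul_scale: "nn_mvmul r c A (\<lambda>j. t * x j) = (\<lambda>i. t * nn_mvmul r c A x i)"
  by (simp add: nn_mvmul_def sum_distrib_left mult_ac fun_eq_iff)

lemma nn_mvmul_norm_le_frobenius:
  "nn_vnorm r (nn_mvmul r c A x) \<le> sqrt (\<Sum>i<r. \<Sum>j<c. (A i j)\<^sup>2) * nn_vnorm c x"
proof -
  have "(\<Sum>i<r. (nn_mvmul r c A x i)\<^sup>2) \<le> (\<Sum>i<r. (\<Sum>j<c. (A i j)\<^sup>2) * (\<Sum>j<c. (x j)\<^sup>2))"
    by (intro sum_mono) (simp add: nn_mvmul_def Cauchy_Schwarz_ineq_sum)
  also have "\<dots> = (\<Sum>i<r. \<Sum>j<c. (A i j)\<^sup>2) * (\<Sum>j<c. (x j)\<^sup>2)"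
    by (simp add: sum_distrib_right)
  finally show ?thesis
    unfolding nn_vnorm_def by (metis real_sqrt_le_mono real_sqrt_mult)
qed

lemma nn_specnorm_upper:
  assumes "nn_vnorm c x \<le> 1"
  shows "nn_vnorm r (nn_mvmul r c A x) \<le> nn_specnorm r c A"
proof -
  have "bdd_above ((\<lambda>x. nn_vnorm r (nn_mvmul r c A x)) ` {x. nn_vnorm c x \<le> 1})"
  proof (rule bdd_aboveI2)
    fix y assume "y \<in> {x. nn_vnorm c x \<le> 1}"
    then have "sqrt (\<Sum>i<r. \<Sum>j<c. (A i j)\<^sup>2) * nn_vnorm c y \<le> sqrt (\<Sum>i<r. \<Sum>j<c. (A i j)\<^sup>2)"
      by (intro mult_left_le) (auto intro!: sum_nonneg)
    then show "nn_vnorm r (nn_mvmul r c A y) \<le> sqrt (\<Sum>i<r. \<Sum>j<c. (A i j)\<^sup>2)"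
      using nn_mvmul_norm_le_frobenius[of r c A y] by linarith
  qed
  then show ?thesis
    unfolding nn_specnorm_def using assms by (intro cSUP_upper) auto
qed

lemma nn_specnorm_nonneg: "0 \<le> nn_specnorm r c A"
  by (rule order_trans[OF nn_vnorm_nonneg nn_specnorm_upper[of c "\<lambda>_. 0"]]) simp

lemma nn_specnorm_zero [simp]: "nn_specnorm r c (\<lambda>_ _. 0) = 0"
proof -
  have "nn_mvmul r c (\<lambda>_ _. 0) x = (\<lambda>_. 0)" for x
    by (simp add: nn_mvmul_def fun_eq_iff)
  moreover have "{x. nn_vnorm c x \<le> 1} \<noteq> {}"
    by (auto intro!: exI[of _ "\<lambda>_. 0"])
  ultimately show ?thesis
    unfolding nn_specnorm_def by (auto simp: image_constant_conv)
qed

lemma nn_mvmul_norm_le: "nn_vnorm r (nn_mvmul r c A x) \<le> nn_specnorm r c A * nn_vnorm c x"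
proof (cases "nn_vnorm c x = 0")
  case True
  then have "nn_mvmul r c A x = (\<lambda>_. 0)"
    by (simp add: nn_vnorm_eq_0_iff nn_mvmul_def fun_eq_iff)
  then show ?thesis using True by simp
next
  case False
  define t where "t = nn_vnorm c x"
  have t: "t > 0" using False nn_vnorm_nonneg[of c x] by (simp add: t_def)
  have "nn_vnorm c (\<lambda>j. (1/t) * x j) = 1"
    using t nn_vnorm_scale[of c "1/t" x] by (simp add: t_def)
  then have "nn_vnorm r (nn_mvmul r c A (\<lambda>j. (1/t) * x j)) \<le> nn_specnorm r c A"
    by (intro nn_specnorm_upper) simp
  moreover have "nn_vnorm r (nn_mvmul r c A (\<lambda>j. (1/t) * x j)) = nn_vnorm r (nn_mvmul r c A x) / t"
    using t by (simp only: nn_mvmul_scale nn_vnorm_scale) simp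
  ultimately show ?thesis using t by (simp add: t_def field_simps)
qed

lemma nn_ball_mvmul_norm_le:
  assumes "W \<in> nn_ball r c M a"
  shows "nn_vnorm r (nn_mvmul r c W x) \<le> (1 + a) * nn_specnorm r c M * nn_vnorm c x"
proof -
  have split: "nn_mvmul r c W x = (\<lambda>i. nn_mvmul r c (\<lambda>i j. W i j - M i j) x i + nn_mvmul r c M x i)"
    using nn_mvmul_diff_mat[of r c W x _ M] by (auto simp: algebra_simps)
  have "nn_vnorm r (nn_mvmul r c W x)
      \<le> nn_vnorm r (nn_mvmul r c (\<lambda>i j. W i j - M i j) x) + nn_vnorm r (nn_mvmul r c M x)"
    unfolding split by (rule nn_vnorm_add_le)
  also have "\<dots> \<le> nn_specnorm r c (\<lambda>i j. W i j - M i j) * nn_vnorm c x + nn_specnorm r c M * nn_vnorm c x"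
    by (intro add_mono nn_mvmul_norm_le)
  also have "\<dots> \<le> a * nn_specnorm r c M * nn_vnorm c x + nn_specnorm r c M * nn_vnorm c x"
    using assms by (intro add_mono mult_right_mono nn_vnorm_nonneg) (auto simp: nn_ball_def)
  finally show ?thesis by (simp add: algebra_simps)
qed

lemma center_in_nn_ball:
  assumes "M \<in> nn_mats r c" "0 \<le> a"
  shows "M \<in> nn_ball r c M a"
  using assms nn_specnorm_nonneg[of r c M] by (simp add: nn_ball_def)

section \<open>The soft-max is nonexpansive\<close>

text \<open>\<open>diag p - p p\<^sup>T\<close> is the Jacobian of the soft-max at a point with output probabilities \<open>p\<close>.\<close>

lemma softmax_jacobian_bilinear_le:
  fixes p h c :: "nat \<Rightarrow> real"
  assumes p0: "\<And>i. i < K \<Longrightarrow> 0 \<le> p i" and p1: "(\<Sum>i<K. p i) = 1"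
  defines "m \<equiv> (\<Sum>j<K. p j * h j)"
  shows "\<bar>\<Sum>i<K. c i * (p i * (h i - m))\<bar> \<le> nn_vnorm K c * nn_vnorm K h"
proof -
  have p_le_1: "p i \<le> 1" if "i < K" for i
    using that p0 p1 member_le_sum[of i "{..<K}" p] by auto
  have "(\<Sum>i<K. (p i * (h i - m))\<^sup>2) \<le> (\<Sum>i<K. p i * (h i - m)\<^sup>2)"
  proof (intro sum_mono)
    fix i assume "i \<in> {..<K}"
    then have "p i * p i \<le> p i" using p0 p_le_1 by (simp add: mult_left_le)
    then have "(p i * p i) * (h i - m)\<^sup>2 \<le> p i * (h i - m)\<^sup>2"
      by (rule mult_right_mono) simp
    then show "(p i * (h i - m))\<^sup>2 \<le> p i * (h i - m)\<^sup>2"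
      by (simp add: power_mult_distrib power2_eq_square[of "p i"])
  qed
  also have "\<dots> = (\<Sum>i<K. p i * (h i)\<^sup>2) - 2 * m * (\<Sum>i<K. p i * h i) + m\<^sup>2 * (\<Sum>i<K. p i)"
    by (simp add: power2_diff algebra_simps sum.distrib sum_subtractf sum_distrib_left sum_distrib_right)
  also have "\<dots> = (\<Sum>i<K. p i * (h i)\<^sup>2) - m\<^sup>2"
    using p1 by (simp add: m_def power2_eq_square)
  also have "\<dots> \<le> (\<Sum>i<K. (h i)\<^sup>2)"
    using sum_mono[of "{..<K}" "\<lambda>i. p i * (h i)\<^sup>2" "\<lambda>i. (h i)\<^sup>2"] p0 p_le_1
    by (smt (verit) lessThan_iff mult_left_le_one_le zero_le_power2)
  finally have centered: "L2_set (\<lambda>i. p i * (h i - m)) {..<K} \<le> nn_vnorm K h"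
    unfolding L2_set_def nn_vnorm_def by (rule real_sqrt_le_mono)
  have "\<bar>\<Sum>i<K. c i * (p i * (h i - m))\<bar> \<le> (\<Sum>i<K. \<bar>c i\<bar> * \<bar>p i * (h i - m)\<bar>)"
    by (rule order_trans[OF sum_abs]) (simp add: abs_mult)
  also have "\<dots> \<le> L2_set c {..<K} * L2_set (\<lambda>i. p i * (h i - m)) {..<K}"
    by (rule L2_set_mult_ineq)
  also have "\<dots> \<le> nn_vnorm K c * nn_vnorm K h"
    using centered by (simp add: nn_vnorm_eq_L2_set mult_left_mono)
  finally show ?thesis .
qed

text \<open>Mean value theorem for \<open>t \<mapsto> \<langle>c, softmax (v + t (u - v))\<rangle>\<close> with
  \<open>c = softmax u - softmax v\<close>: its increment over \<open>[0, 1]\<close> is \<open>|c|\<^sup>2\<close>.\<close>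

lemma nn_softmax_lipschitz:
  "nn_vnorm K (\<lambda>i. nn_softmax K u i - nn_softmax K v i) \<le> nn_vnorm K (\<lambda>i. u i - v i)"
proof (cases "K = 0")
  case True
  then show ?thesis by (simp add: nn_vnorm_def)
next
  case False
  define h where "h i = u i - v i" for i
  define c where "c i = nn_softmax K u i - nn_softmax K v i" for i
  define e where "e t i = exp (v i + t * h i)" for t i
  define S where "S t = (\<Sum>j<K. e t j)" for t
  define S' where "S' t = (\<Sum>j<K. e t j * h j)" for t
  define g where "g t = (\<Sum>i<K. c i * (e t i / S t))" for t
  define g' where "g' t = (\<Sum>i<K. c i * ((e t i * h i * S t - e t i * S' t) / (S t * S t)))" for t
  have S_pos: "S t > 0" for t
    unfolding S_def e_def using False by (intro sum_pos) auto
  have de: "((\<lambda>t. e t i) has_real_derivative e t i * h i) (at t)" for i t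
    unfolding e_def by (auto intro!: derivative_eq_intros)
  have dS: "(S has_real_derivative S' t) (at t)" for t
    unfolding S_def S'_def by (intro DERIV_sum de)
  have dg: "(g has_real_derivative g' t) (at t)" for t
    unfolding g_def g'_def using S_pos[of t]
    by (intro DERIV_sum DERIV_cmult DERIV_divide dS de) auto
  obtain z where "g 1 - g 0 = (1 - 0) * g' z"
    using MVT2[of 0 1 g g'] dg by auto
  moreover have "g 1 - g 0 = (nn_vnorm K c)\<^sup>2"
  proof -
    have "e 1 = (\<lambda>i. exp (u i))" "e 0 = (\<lambda>i. exp (v i))"
      by (simp_all add: e_def h_def fun_eq_iff)
    then have "g 1 - g 0 = (\<Sum>i<K. c i * c i)"
      unfolding g_def S_def
      by (simp add: c_def nn_softmax_def sum_subtractf[symmetric] right_diff_distrib)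
    then show ?thesis unfolding nn_vnorm_sq by (simp add: power2_eq_square)
  qed
  ultimately have c_sq: "(nn_vnorm K c)\<^sup>2 = g' z" by simp
  define p where "p i = e z i / S z" for i
  have p0: "0 \<le> p i" for i using S_pos[of z] by (simp add: p_def e_def)
  have p1: "(\<Sum>i<K. p i) = 1" using S_pos[of z] by (simp add: p_def S_def sum_divide_distrib[symmetric])
  have "g' z = (\<Sum>i<K. c i * (p i * (h i - (\<Sum>j<K. p j * h j))))"
    unfolding g'_def using S_pos[of z]
    by (intro sum.cong refl) (simp add: p_def S'_def sum_divide_distrib[symmetric] field_simps)
  then have "\<bar>g' z\<bar> \<le> nn_vnorm K c * nn_vnorm K h"
    using softmax_jacobian_bilinear_le[of K p, OF p0 p1] by simp
  then have "(nn_vnorm K c)\<^sup>2 \<le> nn_vnorm K c * nn_vnorm K h"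
    using c_sq by simp
  then have "nn_vnorm K c \<le> nn_vnorm K h"
    using nn_vnorm_nonneg[of K c] nn_vnorm_nonneg[of K h]
    by (metis less_eq_real_def mult_le_cancel_left_pos power2_eq_square mult_zero_left)
  then show ?thesis unfolding c_def h_def .
qed

section \<open>Perturbing one layer of a network\<close>

definition nonexpansive :: "nat \<Rightarrow> (vec \<Rightarrow> vec) \<Rightarrow> bool" where
  "nonexpansive k f \<longleftrightarrow> (\<forall>x y. nn_vnorm k (\<lambda>i. f x i - f y i) \<le> nn_vnorm k (\<lambda>i. x i - y i))"

lemma nonexpansive_nn_softmax: "nonexpansive k (nn_softmax k)"
  by (simp add: nonexpansive_def nn_softmax_lipschitz)

lemma nonexpansive_id: "nonexpansive k (\<lambda>x. x)"
  by (simp add: nonexpansive_def)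

definition layer_gain_le :: "(nat \<Rightarrow> nat) \<Rightarrow> weights \<Rightarrow> (nat \<Rightarrow> real) \<Rightarrow> nat \<Rightarrow> bool" where
  "layer_gain_le \<delta> w A j \<longleftrightarrow>
     (\<forall>y. nn_vnorm (\<delta> j) (nn_mvmul (\<delta> j) (\<delta> (j - 1)) (w j) y) \<le> A j * nn_vnorm (\<delta> (j - 1)) y)"

lemma nonexpansive_layer_input_diff:
  assumes "nonexpansive r \<psi>" and "\<forall>y. nn_vnorm r (nn_mvmul r c W y) \<le> A * nn_vnorm c y"
  shows "nn_vnorm r (\<lambda>i. \<psi> (nn_mvmul r c W h) i - \<psi> (nn_mvmul r c W h') i)
           \<le> A * nn_vnorm c (\<lambda>j. h j - h' j)"
proof -
  have "nn_vnorm r (\<lambda>i. \<psi> (nn_mvmul r c W h) i - \<psi> (nn_mvmul r c W h') i)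
      \<le> nn_vnorm r (\<lambda>i. nn_mvmul r c W h i - nn_mvmul r c W h' i)"
    using assms(1) by (simp add: nonexpansive_def)
  also have "\<dots> = nn_vnorm r (nn_mvmul r c W (\<lambda>j. h j - h' j))"
    by (simp add: nn_mvmul_diff_vec)
  finally show ?thesis using assms(2) by (meson order_trans)
qed

lemma nonexpansive_layer_weight_diff:
  assumes "nonexpansive r \<psi>"
    and "\<forall>y. nn_vnorm r (nn_mvmul r c (\<lambda>a b. W a b - W' a b) y) \<le> \<epsilon> * nn_vnorm c y"
  shows "nn_vnorm r (\<lambda>i. \<psi> (nn_mvmul r c W h) i - \<psi> (nn_mvmul r c W' h) i) \<le> \<epsilon> * nn_vnorm c h"
proof -
  have "nn_vnorm r (\<lambda>i. \<psi> (nn_mvmul r c W h) i - \<psi> (nn_mvmul r c W' h) i)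
      \<le> nn_vnorm r (\<lambda>i. nn_mvmul r c W h i - nn_mvmul r c W' h i)"
    using assms(1) by (simp add: nonexpansive_def)
  also have "\<dots> = nn_vnorm r (nn_mvmul r c (\<lambda>a b. W a b - W' a b) h)"
    by (simp add: nn_mvmul_diff_mat)
  finally show ?thesis using assms(2) by (meson order_trans)
qed

lemma nn_hidden_cong:
  "(\<And>i. i \<in> {1..j} \<Longrightarrow> w i = w' i) \<Longrightarrow> nn_hidden \<delta> \<phi> w x j = nn_hidden \<delta> \<phi> w' x j"
  by (induction j) auto

lemma prod_atLeastAtMost_Suc_Diff_singleton:
  fixes A :: "nat \<Rightarrow> 'a::comm_monoid_mult"
  assumes "Suc K \<noteq> k"
  shows "(\<Prod>j\<in>{1..Suc K}-{k}. A j) = A (Suc K) * (\<Prod>j\<in>{1..K}-{k}. A j)"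
proof -
  have "{1..Suc K}-{k} = insert (Suc K) ({1..K}-{k})" using assms by auto
  then show ?thesis by simp
qed

locale nn_activation =
  fixes \<phi> :: "nat \<Rightarrow> vec \<Rightarrow> vec"
  assumes nonexpansive_activation: "nonexpansive k (\<phi> k)"
    and activation_zero: "i < k \<Longrightarrow> \<phi> k (\<lambda>_. 0) i = 0"
begin

lemma nn_vnorm_activation_le: "nn_vnorm k (\<phi> k x) \<le> nn_vnorm k x"
proof -
  have "nn_vnorm k (\<phi> k x) = nn_vnorm k (\<lambda>i. \<phi> k x i - \<phi> k (\<lambda>_. 0) i)"
    using activation_zero by (intro nn_vnorm_cong) auto
  also have "\<dots> \<le> nn_vnorm k (\<lambda>i. x i - 0)"
    using nonexpansive_activation[of k] unfolding nonexpansive_def by blast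
  finally show ?thesis by simp
qed

lemma nn_hidden_norm_le:
  assumes "\<forall>j\<in>{1..K}. layer_gain_le \<delta> w A j" and "\<forall>j\<in>{1..K}. 0 \<le> A j"
  shows "nn_vnorm (\<delta> K) (nn_hidden \<delta> \<phi> w x K) \<le> (\<Prod>j\<in>{1..K}. A j) * nn_vnorm (\<delta> 0) x"
  using assms
proof (induction K)
  case 0
  then show ?case by simp
next
  case (Suc K)
  have "nn_vnorm (\<delta> (Suc K)) (nn_hidden \<delta> \<phi> w x (Suc K))
      \<le> nn_vnorm (\<delta> (Suc K)) (nn_mvmul (\<delta> (Suc K)) (\<delta> K) (w (Suc K)) (nn_hidden \<delta> \<phi> w x K))"
    by (simp add: nn_vnorm_activation_le)
  also have "\<dots> \<le> A (Suc K) * nn_vnorm (\<delta> K) (nn_hidden \<delta> \<phi> w x K)"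
    using bspec[OF Suc.prems(1), of "Suc K"] by (simp add: layer_gain_le_def)
  also have "\<dots> \<le> A (Suc K) * ((\<Prod>j\<in>{1..K}. A j) * nn_vnorm (\<delta> 0) x)"
    using Suc by (intro mult_left_mono) auto
  also have "\<dots> = (\<Prod>j\<in>{1..Suc K}. A j) * nn_vnorm (\<delta> 0) x"
    by (simp add: prod.cl_ivl_Suc)
  finally show ?case .
qed

lemma nn_hidden_perturb_layer:
  assumes "1 \<le> k" "k \<le> K"
    and same: "\<forall>j\<in>{1..K}-{k}. w' j = w j"
    and gain: "\<forall>j\<in>{1..K}-{k}. layer_gain_le \<delta> w A j" and A0: "\<forall>j\<in>{1..K}-{k}. 0 \<le> A j"
    and eps: "\<forall>y. nn_vnorm (\<delta> k) (nn_mvmul (\<delta> k) (\<delta> (k-1)) (\<lambda>a b. w k a b - w' k a b) y)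
                   \<le> \<epsilon> * nn_vnorm (\<delta> (k-1)) y"
    and "0 \<le> \<epsilon>"
  shows "nn_vnorm (\<delta> K) (\<lambda>i. nn_hidden \<delta> \<phi> w x K i - nn_hidden \<delta> \<phi> w' x K i)
           \<le> \<epsilon> * (\<Prod>j\<in>{1..K}-{k}. A j) * nn_vnorm (\<delta> 0) x"
  using \<open>k \<le> K\<close> same gain A0
proof (induction K rule: dec_induct)
  case base
  obtain k0 where k0: "k = Suc k0" using \<open>1 \<le> k\<close> by (cases k) auto
  have below: "{1..k}-{k} = {1..k0}" using k0 by auto
  have "nn_hidden \<delta> \<phi> w' x k0 = nn_hidden \<delta> \<phi> w x k0"
    using base(1) by (intro nn_hidden_cong) (auto simp: k0)
  then have "nn_vnorm (\<delta> k) (\<lambda>i. nn_hidden \<delta> \<phi> w x k i - nn_hidden \<delta> \<phi> w' x k i)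
      \<le> \<epsilon> * nn_vnorm (\<delta> k0) (nn_hidden \<delta> \<phi> w x k0)"
    using nonexpansive_layer_weight_diff[OF nonexpansive_activation eps] by (simp add: k0)
  also have "\<dots> \<le> \<epsilon> * ((\<Prod>j\<in>{1..k0}. A j) * nn_vnorm (\<delta> 0) x)"
    using base(2,3) below \<open>0 \<le> \<epsilon>\<close> by (intro mult_left_mono nn_hidden_norm_le) auto
  finally show ?case unfolding below by (simp add: mult.assoc)
next
  case (step K)
  have "Suc K \<noteq> k" using step.hyps by auto
  then have "w' (Suc K) = w (Suc K)" "layer_gain_le \<delta> w A (Suc K)" "0 \<le> A (Suc K)"
    using step.prems by auto
  then have "nn_vnorm (\<delta> (Suc K)) (\<lambda>i. nn_hidden \<delta> \<phi> w x (Suc K) i - nn_hidden \<delta> \<phi> w' x (Suc K) i)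
      \<le> A (Suc K) * nn_vnorm (\<delta> K) (\<lambda>i. nn_hidden \<delta> \<phi> w x K i - nn_hidden \<delta> \<phi> w' x K i)"
    using nonexpansive_layer_input_diff[OF nonexpansive_activation] by (simp add: layer_gain_le_def)
  also have "\<dots> \<le> A (Suc K) * (\<epsilon> * (\<Prod>j\<in>{1..K}-{k}. A j) * nn_vnorm (\<delta> 0) x)"
    using step \<open>0 \<le> A (Suc K)\<close> by (intro mult_left_mono) auto
  also have "\<dots> = \<epsilon> * (\<Prod>j\<in>{1..Suc K}-{k}. A j) * nn_vnorm (\<delta> 0) x"
    using prod_atLeastAtMost_Suc_Diff_singleton[OF \<open>Suc K \<noteq> k\<close>, of A] by (simp add: mult_ac)
  finally show ?case .
qed

lemma nn_net_perturb_layer: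
  assumes "nonexpansive (\<delta> d) (\<phi>o (\<delta> d))"
    and "1 \<le> k" "k \<le> d"
    and same: "\<forall>j\<in>{1..d}-{k}. w' j = w j"
    and gain: "\<forall>j\<in>{1..d}-{k}. layer_gain_le \<delta> w A j" and A0: "\<forall>j\<in>{1..d}-{k}. 0 \<le> A j"
    and eps: "\<forall>y. nn_vnorm (\<delta> k) (nn_mvmul (\<delta> k) (\<delta> (k-1)) (\<lambda>a b. w k a b - w' k a b) y)
                   \<le> \<epsilon> * nn_vnorm (\<delta> (k-1)) y"
    and "0 \<le> \<epsilon>"
  shows "nn_vnorm (\<delta> d) (\<lambda>i. nn_net d \<delta> \<phi> \<phi>o w x i - nn_net d \<delta> \<phi> \<phi>o w' x i)
           \<le> \<epsilon> * (\<Prod>j\<in>{1..d}-{k}. A j) * nn_vnorm (\<delta> 0) x"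
proof (cases "k = d")
  case True
  have below: "{1..d}-{k} = {1..d-1}" using True \<open>1 \<le> k\<close> by auto
  have "nn_hidden \<delta> \<phi> w' x (d - 1) = nn_hidden \<delta> \<phi> w x (d - 1)"
    using same True by (intro nn_hidden_cong) auto
  then have "nn_vnorm (\<delta> d) (\<lambda>i. nn_net d \<delta> \<phi> \<phi>o w x i - nn_net d \<delta> \<phi> \<phi>o w' x i)
      \<le> \<epsilon> * nn_vnorm (\<delta> (d-1)) (nn_hidden \<delta> \<phi> w x (d - 1))"
    unfolding nn_net_def using nonexpansive_layer_weight_diff[OF assms(1)] eps True by simp
  also have "\<dots> \<le> \<epsilon> * ((\<Prod>j\<in>{1..d-1}. A j) * nn_vnorm (\<delta> 0) x)"
    using gain A0 below \<open>0 \<le> \<epsilon>\<close> by (intro mult_left_mono nn_hidden_norm_le) auto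
  finally show ?thesis unfolding below by (simp add: mult.assoc)
next
  case False
  then obtain K where K: "d = Suc K" "k \<le> K" using \<open>k \<le> d\<close> by (cases d) auto
  have "d \<noteq> k" using False by auto
  then have "w' d = w d" "layer_gain_le \<delta> w A d" "0 \<le> A d"
    using same gain A0 \<open>1 \<le> k\<close> \<open>k \<le> d\<close> by auto
  then have "nn_vnorm (\<delta> d) (\<lambda>i. nn_net d \<delta> \<phi> \<phi>o w x i - nn_net d \<delta> \<phi> \<phi>o w' x i)
      \<le> A d * nn_vnorm (\<delta> K) (\<lambda>i. nn_hidden \<delta> \<phi> w x K i - nn_hidden \<delta> \<phi> w' x K i)"
    unfolding nn_net_def using nonexpansive_layer_input_diff[OF assms(1)]
    by (simp add: layer_gain_le_def K)
  also have "\<dots> \<le> A d * (\<epsilon> * (\<Prod>j\<in>{1..K}-{k}. A j) * nn_vnorm (\<delta> 0) x)"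
  proof -
    have "nn_vnorm (\<delta> K) (\<lambda>i. nn_hidden \<delta> \<phi> w x K i - nn_hidden \<delta> \<phi> w' x K i)
        \<le> \<epsilon> * (\<Prod>j\<in>{1..K}-{k}. A j) * nn_vnorm (\<delta> 0) x"
      using same gain A0 K eps \<open>1 \<le> k\<close> \<open>0 \<le> \<epsilon>\<close> by (intro nn_hidden_perturb_layer) auto
    then show ?thesis using \<open>0 \<le> A d\<close> by (rule mult_left_mono)
  qed
  also have "\<dots> = \<epsilon> * (\<Prod>j\<in>{1..d}-{k}. A j) * nn_vnorm (\<delta> 0) x"
    using prod_atLeastAtMost_Suc_Diff_singleton[of K k A] \<open>d \<noteq> k\<close> K by (simp add: mult_ac)
  finally show ?thesis .
qed

end

text \<open>The left-hand side is the gain of a network whose layers below \<open>k\<close> lie in the balls,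
  whose layers above \<open>k\<close> are the centres, and whose layer \<open>k\<close> is perturbed by \<open>\<alpha>\<^sub>k\<close>
  times the norm of the centre; \<open>1 + \<alpha> \<le> exp \<alpha>\<close> produces the factor \<open>\<beta>\<^sub>k\<close>.\<close>

lemma perturbation_gain_le_nn_beta:
  fixes s \<alpha> :: "nat \<Rightarrow> real"
  assumes "1 \<le> k" "k \<le> d" and s0: "\<forall>j. 0 \<le> s j" and \<alpha>0: "\<forall>j\<in>{1..d}. 0 \<le> \<alpha> j"
  shows "\<alpha> k * s k * (\<Prod>j\<in>{1..d}-{k}. if j < k then (1 + \<alpha> j) * s j else s j)
         \<le> nn_beta \<alpha> k * (\<Prod>j\<in>{1..d}. s j)"
proof -
  have "(\<Prod>j\<in>{1..d}-{k}. if j < k then (1 + \<alpha> j) * s j else s j)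
      \<le> (\<Prod>j\<in>{1..d}-{k}. exp (if j < k then \<alpha> j else 0) * s j)"
    using s0 \<alpha>0 exp_ge_add_one_self by (intro prod_mono) (auto intro: mult_right_mono)
  also have "\<dots> = exp (\<Sum>j\<in>{1..d}-{k}. if j < k then \<alpha> j else 0) * (\<Prod>j\<in>{1..d}-{k}. s j)"
    by (simp add: prod.distrib exp_sum)
  also have "(\<Sum>j\<in>{1..d}-{k}. if j < k then \<alpha> j else 0) = (\<Sum>j\<in>{1..<k}. \<alpha> j)"
  proof -
    have "({1..d}-{k}) \<inter> {j. j < k} = {1..<k}" using assms by auto
    then show ?thesis by (simp add: sum.If_cases)
  qed
  finally have "\<alpha> k * s k * (\<Prod>j\<in>{1..d}-{k}. if j < k then (1 + \<alpha> j) * s j else s j)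
      \<le> \<alpha> k * s k * (exp (\<Sum>j\<in>{1..<k}. \<alpha> j) * (\<Prod>j\<in>{1..d}-{k}. s j))"
    using assms by (intro mult_left_mono) auto
  also have "\<dots> = nn_beta \<alpha> k * (s k * (\<Prod>j\<in>{1..d}-{k}. s j))"
    by (simp add: nn_beta_def mult_ac)
  also have "s k * (\<Prod>j\<in>{1..d}-{k}. s j) = (\<Prod>j\<in>{1..d}. s j)"
    using assms by (subst prod.remove[of "{1..d}" k]) auto
  finally show ?thesis .
qed

section \<open>Kernels of mass functions and i.i.d.\ samples\<close>

lemma borel_measurable_nn_integral_count_space:
  fixes f :: "'i \<Rightarrow> 'a \<Rightarrow> ennreal"
  assumes "countable I" and meas: "\<And>i. i \<in> I \<Longrightarrow> f i \<in> borel_measurable M"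
  shows "(\<lambda>x. \<integral>\<^sup>+i. f i x \<partial>count_space I) \<in> borel_measurable M"
proof (cases "finite I")
  case True
  then show ?thesis using meas by (simp add: nn_integral_count_space_finite)
next
  case False
  then have "I \<noteq> {}" by auto
  have "(\<integral>\<^sup>+i. f i x \<partial>count_space I) = (\<Sum>n. f (from_nat_into I n) x)" for x
    using bij_betw_from_nat_into[OF \<open>countable I\<close> False]
    by (simp add: nn_integral_bij_count_space[symmetric] nn_integral_count_space_nat)
  moreover have "(\<lambda>x. f (from_nat_into I n) x) \<in> borel_measurable M" for n
    using meas from_nat_into[OF \<open>I \<noteq> {}\<close>] by auto
  ultimately show ?thesis by simp
qed

lemma nn_integral_measure_pmf_count_space:
  assumes "set_pmf p \<subseteq> T"
  shows "(\<integral>\<^sup>+ w. h w \<partial>measure_pmf p) = (\<integral>\<^sup>+ w. ennreal (pmf p w) * h w \<partial>count_space T)"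
proof -
  have "(\<integral>\<^sup>+ w. h w \<partial>measure_pmf p) = (\<integral>\<^sup>+ w. ennreal (pmf p w) * h w \<partial>count_space UNIV)"
    by (rule nn_integral_measure_pmf)
  also have "\<dots> = (\<integral>\<^sup>+ w. ennreal (pmf p w) * h w * indicator T w \<partial>count_space UNIV)"
    using assms by (intro nn_integral_cong) (auto simp: indicator_def pmf_eq_0_set_pmf)
  finally show ?thesis by (simp add: nn_integral_count_space_indicator)
qed

lemma borel_measurable_nn_integral_pmf_kernel:
  assumes "countable T" and supp: "\<forall>s\<in>space M. set_pmf (P s) \<subseteq> T"
    and pmf_meas: "\<forall>w. (\<lambda>s. ennreal (pmf (P s) w)) \<in> borel_measurable M"
    and meas: "\<And>w. w \<in> T \<Longrightarrow> h w \<in> borel_measurable M"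
  shows "(\<lambda>s. \<integral>\<^sup>+ w. h w s \<partial>measure_pmf (P s)) \<in> borel_measurable M"
proof -
  have "(\<lambda>s. \<integral>\<^sup>+ w. ennreal (pmf (P s) w) * h w s \<partial>count_space T) \<in> borel_measurable M"
    using pmf_meas meas
    by (intro borel_measurable_nn_integral_count_space \<open>countable T\<close> borel_measurable_times_ennreal)
       blast+
  then show ?thesis
    by (rule measurable_cong[THEN iffD1, rotated])
       (subst nn_integral_measure_pmf_count_space[where T=T], use supp in auto)
qed

lemma (in prob_space) nn_integral_PiM_component:
  assumes "g \<in> borel_measurable M" and "i < n"
  shows "(\<integral>\<^sup>+ s. g (s i) \<partial>PiM {..<n} (\<lambda>_. M)) = integral\<^sup>N M g"
proof -
  interpret product_prob_space "\<lambda>_. M" "{..<n}" ..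
  have "(\<integral>\<^sup>+ s. g (s i) \<partial>PiM {..<n} (\<lambda>_. M)) = integral\<^sup>N (distr (PiM {..<n} (\<lambda>_. M)) M (\<lambda>s. s i)) g"
    using assms by (subst nn_integral_distr) auto
  also have "\<dots> = integral\<^sup>N M g"
    using PiM_component[of i] assms(2) by simp
  finally show ?thesis .
qed

lemma (in prob_space) nn_integral_emp_loss:
  assumes "lf w \<in> borel_measurable M" and "\<And>z. 0 \<le> lf w z" and "0 < n"
  shows "(\<integral>\<^sup>+ s. ennreal (emp_loss lf n w s) \<partial>PiM {..<n} (\<lambda>_. M)) = pop_loss lf M w"
proof -
  have "ennreal (emp_loss lf n w s) = ennreal (1 / real n) * (\<Sum>i<n. ennreal (lf w (s i)))" for s
    using assms(2) by (simp add: emp_loss_def ennreal_mult'[symmetric] sum_ennreal sum_nonneg)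
  then have "(\<integral>\<^sup>+ s. ennreal (emp_loss lf n w s) \<partial>PiM {..<n} (\<lambda>_. M))
      = ennreal (1 / real n) * (\<integral>\<^sup>+ s. (\<Sum>i<n. ennreal (lf w (s i))) \<partial>PiM {..<n} (\<lambda>_. M))"
    using assms(1) by (simp add: nn_integral_cmult)
  also have "\<dots> = ennreal (1 / real n) * (\<Sum>i<n. \<integral>\<^sup>+ s. ennreal (lf w (s i)) \<partial>PiM {..<n} (\<lambda>_. M))"
    using assms(1) by (subst nn_integral_sum) auto
  also have "\<dots> = ennreal (1 / real n) * (of_nat n * pop_loss lf M w)"
  proof -
    have "(\<lambda>z. ennreal (lf w z)) \<in> borel_measurable M" using assms(1) by measurable
    then have "\<And>i. i \<in> {..<n} \<Longrightarrow>
        (\<integral>\<^sup>+ s. ennreal (lf w (s i)) \<partial>PiM {..<n} (\<lambda>_. M)) = pop_loss lf M w"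
      unfolding pop_loss_def using nn_integral_PiM_component[of "\<lambda>z. ennreal (lf w z)" _ n] by auto
    then show ?thesis by simp
  qed
  also have "\<dots> = pop_loss lf M w"
    using assms(3) by (simp add: ennreal_of_nat_eq_real_of_nat mult.assoc[symmetric]
        ennreal_mult'[symmetric])
  finally show ?thesis .
qed

lemma (in prob_space) Hoeffding_empirical_mean_mgf:
  assumes f_meas: "f \<in> borel_measurable M" and bound: "\<And>z. z \<in> space M \<Longrightarrow> \<bar>f z\<bar> \<le> a"
    and "0 < n" and "0 < l"
  shows "(\<integral>\<^sup>+ s. ennreal (exp (l * (integral\<^sup>L M f - (\<Sum>i<n. f (s i)) / real n))) \<partial>PiM {..<n} (\<lambda>_. M))
           \<le> ennreal (exp (l\<^sup>2 * a\<^sup>2 / (2 * real n)))"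
proof -
  interpret product_prob_space "\<lambda>_. M" "{..<n}" ..
  define t where "t = l / real n"
  have "t > 0" using assms by (simp add: t_def)
  interpret neg_f: interval_bounded_random_variable M "\<lambda>z. - f z" "- a" a
    using f_meas bound by unfold_locales (auto intro!: AE_I2 simp: abs_le_iff)
  define g where "g = (\<lambda>z. ennreal (exp (t * (integral\<^sup>L M f - f z))))"
  have g_meas: "g \<in> borel_measurable M" unfolding g_def using f_meas by measurable
  have "integral\<^sup>N M g = (\<integral>\<^sup>+ z. exp (t * (- f z - integral\<^sup>L M (\<lambda>z. - f z))) \<partial>M)"
    by (simp add: g_def algebra_simps)
  also have "\<dots> \<le> ennreal (exp (t\<^sup>2 * (a - - a)\<^sup>2 / 8))"
    by (rule neg_f.Hoeffdings_lemma_nn_integral[OF \<open>t > 0\<close>])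
  also have "t\<^sup>2 * (a - - a)\<^sup>2 / 8 = t\<^sup>2 * a\<^sup>2 / 2" by (simp add: power2_eq_square)
  finally have g_le: "integral\<^sup>N M g \<le> ennreal (exp (t\<^sup>2 * a\<^sup>2 / 2))" .
  have "l * (integral\<^sup>L M f - (\<Sum>i<n. f (s i)) / real n) = (\<Sum>i<n. t * (integral\<^sup>L M f - f (s i)))" for s
  proof -
    have "(\<Sum>i<n. t * (integral\<^sup>L M f - f (s i))) = t * (real n * integral\<^sup>L M f) - t * (\<Sum>i<n. f (s i))"
      by (simp add: right_diff_distrib sum_subtractf sum_distrib_left)
    then show ?thesis using \<open>0 < n\<close> by (simp add: t_def field_simps)
  qed
  then have "ennreal (exp (l * (integral\<^sup>L M f - (\<Sum>i<n. f (s i)) / real n))) = (\<Prod>i<n. g (s i))" for s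
    by (simp add: g_def exp_sum prod_ennreal)
  then have "(\<integral>\<^sup>+ s. ennreal (exp (l * (integral\<^sup>L M f - (\<Sum>i<n. f (s i)) / real n))) \<partial>PiM {..<n} (\<lambda>_. M))
      = (\<Prod>i<n. integral\<^sup>N M g)"
    using g_meas by (simp only:) (intro product_nn_integral_prod, auto)
  also have "\<dots> = (integral\<^sup>N M g) ^ n"
    by simp
  also have "\<dots> \<le> (ennreal (exp (t\<^sup>2 * a\<^sup>2 / 2))) ^ n"
    by (intro power_mono g_le) auto
  also have "\<dots> = ennreal (exp (l\<^sup>2 * a\<^sup>2 / (2 * real n)))"
    using \<open>0 < n\<close> by (simp add: ennreal_power exp_of_nat_mult[symmetric] t_def power2_eq_square field_simps)
  finally show ?thesis .
qed

section \<open>Relative entropy and change of measure\<close>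

lemma KL_pmf_return_pmf: "KL_pmf (return_pmf a) q = neglog (pmf q a)"
proof (cases "pmf q a = 0")
  case True
  have "(\<integral>\<^sup>+ x. \<infinity> * indicator {a} x \<partial>count_space UNIV) \<le> KL_pmf (return_pmf a) q"
    unfolding KL_pmf_def using True
    by (intro nn_integral_mono) (auto simp: indicator_def pmf_return)
  then show ?thesis using True by (simp add: neglog_def top_unique)
next
  case False
  then have q_pos: "0 < pmf q a" using pmf_nonneg[of q a] by linarith
  define r where "r = - ln (pmf q a) - 1 + pmf q a"
  have "0 \<le> r" unfolding r_def using ln_le_minus_one[OF q_pos] by simp
  have "KL_pmf (return_pmf a) q
      = (\<integral>\<^sup>+ x. ennreal (pmf q x) * indicator (-{a}) x + ennreal r * indicator {a} x \<partial>count_space UNIV)"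
    unfolding KL_pmf_def using False
    by (intro nn_integral_cong) (auto simp: indicator_def pmf_return r_def ln_div q_pos)
  also have "\<dots> = emeasure (measure_pmf q) (-{a}) + ennreal r"
    by (simp add: nn_integral_add nn_integral_count_space_indicator[symmetric] nn_integral_pmf)
  also have "emeasure (measure_pmf q) (-{a}) = ennreal (1 - pmf q a)"
    using measure_pmf.prob_compl[of "{a}" q]
    by (simp add: measure_pmf.emeasure_eq_measure measure_pmf_single Compl_eq_Diff_UNIV)
  also have "ennreal (1 - pmf q a) + ennreal r = ennreal (- ln (pmf q a))"
    using \<open>0 \<le> r\<close> pmf_le_1[of q a] by (subst ennreal_plus[symmetric]) (auto simp: r_def)
  finally show ?thesis using False by (simp add: neglog_def)
qed

text \<open>Young's inequality for the convex conjugate pair \<open>t ln t - t + 1\<close> and \<open>exp g - 1\<close>.\<close>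

lemma mult_le_entropy_plus_exp:
  fixes p q g :: real
  assumes "0 < p" "0 < q"
  shows "p * g \<le> p * ln (p / q) - p + q * exp g"
proof -
  define y where "y = g - ln (p / q)"
  have "q * exp g = p * exp y" using assms by (simp add: y_def exp_diff field_simps)
  moreover have "p * (1 + y) \<le> p * exp y"
    using assms exp_ge_add_one_self[of y] by (intro mult_left_mono) auto
  ultimately show ?thesis by (simp add: y_def algebra_simps)
qed

definition kl_integrand :: "real \<Rightarrow> real \<Rightarrow> ennreal" where
  "kl_integrand p q = (if p = 0 then ennreal q else if q = 0 then \<infinity>
                        else ennreal (p * ln (p / q) - p + q))"

lemma KL_pmf_eq_kl_integrand:
  "KL_pmf p q = (\<integral>\<^sup>+ x. kl_integrand (pmf p x) (pmf q x) \<partial>count_space UNIV)"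
  by (simp add: KL_pmf_def kl_integrand_def)

lemma kl_integrand_young:
  fixes p q g r :: real
  assumes "0 \<le> p" "0 \<le> q" "0 < p \<Longrightarrow> 0 \<le> g + r" "0 \<le> r"
  shows "ennreal p * ennreal (g + r) + ennreal q
           \<le> kl_integrand p q + ennreal q * ennreal (exp g) + ennreal p * ennreal r"
proof (cases "p = 0 \<or> q = 0")
  case True
  then show ?thesis by (auto simp: kl_integrand_def)
next
  case False
  then have "0 < p" "0 < q" using assms by auto
  have "0 \<le> g + r" using assms \<open>0 < p\<close> by simp
  have kl_nonneg: "0 \<le> p * ln (p / q) - p + q"
    using mult_le_entropy_plus_exp[OF \<open>0 < p\<close> \<open>0 < q\<close>, of 0] by simp
  have "ennreal p * ennreal (g + r) + ennreal q = ennreal (p * (g + r) + q)"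
    using \<open>0 < p\<close> \<open>0 < q\<close> \<open>0 \<le> g + r\<close> by (simp add: ennreal_mult ennreal_plus)
  also have "\<dots> \<le> ennreal ((p * ln (p / q) - p + q) + q * exp g + p * r)"
    using mult_le_entropy_plus_exp[OF \<open>0 < p\<close> \<open>0 < q\<close>, of g] by (intro ennreal_leI) (simp add: algebra_simps)
  also have "\<dots> = kl_integrand p q + ennreal q * ennreal (exp g) + ennreal p * ennreal r"
    using \<open>0 < p\<close> \<open>0 < q\<close> kl_nonneg \<open>0 \<le> r\<close> by (simp add: kl_integrand_def ennreal_mult ennreal_plus)
  finally show ?thesis .
qed

text \<open>The change-of-measure inequality behind PAC-Bayesian bounds, in the linearised form
  \<open>E\<^sub>p G \<le> KL(p, q) + E\<^sub>q (exp G) - 1\<close>, shifted by \<open>r\<close> to keep the integrands nonnegative.\<close>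

lemma KL_pmf_change_of_measure:
  assumes "0 \<le> r" and "\<And>u. u \<in> set_pmf p \<Longrightarrow> 0 \<le> G u + r"
  shows "(\<integral>\<^sup>+ u. ennreal (G u + r) \<partial>p) + 1
           \<le> KL_pmf p q + (\<integral>\<^sup>+ u. ennreal (exp (G u)) \<partial>q) + ennreal r"
proof -
  have "(\<integral>\<^sup>+ u. ennreal (G u + r) \<partial>p) + 1
      = (\<integral>\<^sup>+ u. ennreal (pmf p u) * ennreal (G u + r) + ennreal (pmf q u) \<partial>count_space UNIV)"
    by (simp add: nn_integral_add nn_integral_measure_pmf nn_integral_pmf)
  also have "\<dots> \<le> (\<integral>\<^sup>+ u. kl_integrand (pmf p u) (pmf q u) + ennreal (pmf q u) * ennreal (exp (G u))
                      + ennreal (pmf p u) * ennreal r \<partial>count_space UNIV)"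
    using assms by (intro nn_integral_mono kl_integrand_young) (auto simp: set_pmf_iff)
  also have "\<dots> = KL_pmf p q + (\<integral>\<^sup>+ u. ennreal (exp (G u)) \<partial>q) + ennreal r"
    by (simp add: nn_integral_add KL_pmf_eq_kl_integrand nn_integral_measure_pmf nn_integral_multc
        nn_integral_pmf)
  finally show ?thesis .
qed

lemma borel_measurable_KL_pmf_kernel:
  assumes "countable T" and supp: "\<forall>s\<in>space M. set_pmf (P s) \<subseteq> T"
    and "\<forall>w. (\<lambda>s. ennreal (pmf (P s) w)) \<in> borel_measurable M"
    and Q: "set_pmf Q \<subseteq> \<pi> ` T"
  shows "(\<lambda>s. KL_pmf (map_pmf \<pi> (P s)) Q) \<in> borel_measurable M"
proof -
  define U where "U = \<pi> ` T"
  have "KL_pmf (map_pmf \<pi> (P s)) Q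
      = (\<integral>\<^sup>+ u. kl_integrand (pmf (map_pmf \<pi> (P s)) u) (pmf Q u) \<partial>count_space U)"
    if "s \<in> space M" for s
  proof -
    have "set_pmf (map_pmf \<pi> (P s)) \<subseteq> U" using supp that by (auto simp: U_def)
    then have "KL_pmf (map_pmf \<pi> (P s)) Q = (\<integral>\<^sup>+ u. kl_integrand (pmf (map_pmf \<pi> (P s)) u) (pmf Q u)
          * indicator U u \<partial>count_space UNIV)"
      unfolding KL_pmf_eq_kl_integrand using Q
      by (intro nn_integral_cong) (auto simp: indicator_def kl_integrand_def pmf_eq_0_set_pmf U_def)
    then show ?thesis by (simp add: nn_integral_count_space_indicator)
  qed
  moreover have "(\<lambda>s. kl_integrand (pmf (map_pmf \<pi> (P s)) u) (pmf Q u)) \<in> borel_measurable M" for u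
  proof -
    have "(\<lambda>s. ennreal (pmf (map_pmf \<pi> (P s)) u)) \<in> borel_measurable M"
      unfolding ennreal_pmf_map
      using assms by (intro borel_measurable_nn_integral_pmf_kernel) auto
    then have "(\<lambda>s. enn2real (ennreal (pmf (map_pmf \<pi> (P s)) u))) \<in> borel_measurable M"
      by measurable
    then have [measurable]: "(\<lambda>s. pmf (map_pmf \<pi> (P s)) u) \<in> borel_measurable M"
      by simp
    show ?thesis unfolding kl_integrand_def by measurable
  qed
  then have "(\<lambda>s. \<integral>\<^sup>+ u. kl_integrand (pmf (map_pmf \<pi> (P s)) u) (pmf Q u) \<partial>count_space U)
      \<in> borel_measurable M"
    using \<open>countable T\<close> by (intro borel_measurable_nn_integral_count_space) (auto simp: U_def)
  ultimately show ?thesis by (simp cong: measurable_cong)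
qed

lemma nn_integral_pmf_mixture_le_1:
  assumes meas: "\<And>u. u \<in> set_pmf Q \<Longrightarrow> f u \<in> borel_measurable M"
    and le_1: "\<And>u. u \<in> set_pmf Q \<Longrightarrow> integral\<^sup>N M (f u) \<le> 1"
  shows "(\<integral>\<^sup>+ s. \<integral>\<^sup>+ u. f u s \<partial>Q \<partial>M) \<le> 1"
proof -
  have "(\<integral>\<^sup>+ s. \<integral>\<^sup>+ u. f u s \<partial>Q \<partial>M)
      = (\<integral>\<^sup>+ s. \<integral>\<^sup>+ u. ennreal (pmf Q u) * f u s \<partial>count_space (set_pmf Q) \<partial>M)"
    by (intro nn_integral_cong nn_integral_measure_pmf_count_space) simp
  also have "\<dots> = (\<integral>\<^sup>+ u. \<integral>\<^sup>+ s. ennreal (pmf Q u) * f u s \<partial>M \<partial>count_space (set_pmf Q))"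
    using meas by (intro nn_integral_count_space_nn_integral) auto
  also have "\<dots> \<le> (\<integral>\<^sup>+ u. ennreal (pmf Q u) \<partial>count_space (set_pmf Q))"
  proof (intro nn_integral_mono)
    fix u assume "u \<in> space (count_space (set_pmf Q))"
    then have u: "u \<in> set_pmf Q" by simp
    have "(\<integral>\<^sup>+ s. ennreal (pmf Q u) * f u s \<partial>M) = ennreal (pmf Q u) * integral\<^sup>N M (f u)"
      using meas[OF u] by (rule nn_integral_cmult)
    also have "\<dots> \<le> ennreal (pmf Q u)"
      using mult_left_mono[OF le_1[OF u], of "ennreal (pmf Q u)"] by simp
    finally show "(\<integral>\<^sup>+ s. ennreal (pmf Q u) * f u s \<partial>M) \<le> ennreal (pmf Q u)" .
  qed
  also have "\<dots> = 1"
    by (simp add: nn_integral_pmf emeasure_pmf)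
  finally show ?thesis .
qed

lemma KL_pmf_map_change_of_measure:
  fixes F :: "'u \<Rightarrow> real" and \<pi> :: "'w \<Rightarrow> 'u"
  assumes "0 < l" "0 \<le> b" "0 \<le> c" and lower: "\<And>w. w \<in> set_pmf p \<Longrightarrow> 0 \<le> F (\<pi> w) + b"
  shows "ennreal l * (\<integral>\<^sup>+ w. ennreal (F (\<pi> w) + b) \<partial>p) + 1
           \<le> KL_pmf (map_pmf \<pi> p) q + (\<integral>\<^sup>+ u. ennreal (exp (l * F u - c)) \<partial>q) + ennreal (c + l * b)"
proof -
  have "ennreal l * (\<integral>\<^sup>+ w. ennreal (F (\<pi> w) + b) \<partial>p)
      = (\<integral>\<^sup>+ u. ennreal ((l * F u - c) + (c + l * b)) \<partial>map_pmf \<pi> p)"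
    using \<open>0 < l\<close>
    by (simp add: nn_integral_cmult[symmetric] nn_integral_map_pmf ennreal_mult'[symmetric] algebra_simps)
  moreover have "0 \<le> (l * F u - c) + (c + l * b)" if u: "u \<in> set_pmf (map_pmf \<pi> p)" for u
  proof -
    obtain w where "w \<in> set_pmf p" "u = \<pi> w" using u by auto
    then have "0 \<le> l * (F u + b)" using lower \<open>0 < l\<close> by simp
    then show ?thesis by (simp add: algebra_simps)
  qed
  moreover have "0 \<le> c + l * b" using assms by simp
  ultimately show ?thesis by (metis KL_pmf_change_of_measure)
qed

text \<open>Averaged over the sample, the change of measure turns a moment-generating bound
  \<open>E\<^sub>s exp (l F u s) \<le> exp c\<close>, valid for each \<open>u\<close> drawn from the prior \<open>Q\<close>, into a bound
  on the posterior average of \<open>F\<close> with the relative entropy to \<open>Q\<close> as penalty.\<close>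

lemma (in prob_space) nn_integral_kernel_le_cond_KL:
  fixes P :: "'a \<Rightarrow> 'w pmf" and \<pi> :: "'w \<Rightarrow> 'u" and F :: "'u \<Rightarrow> 'a \<Rightarrow> real"
  assumes "countable T" and supp: "\<forall>s\<in>space M. set_pmf (P s) \<subseteq> T"
    and pmf_meas: "\<forall>w. (\<lambda>s. ennreal (pmf (P s) w)) \<in> borel_measurable M"
    and Q: "set_pmf Q \<subseteq> \<pi> ` T"
    and F_meas: "\<And>u. u \<in> \<pi> ` T \<Longrightarrow> F u \<in> borel_measurable M"
    and lower: "\<And>w s. w \<in> T \<Longrightarrow> s \<in> space M \<Longrightarrow> 0 \<le> F (\<pi> w) s + b"
    and mgf: "\<And>u. u \<in> set_pmf Q \<Longrightarrow> (\<integral>\<^sup>+ s. ennreal (exp (l * F u s)) \<partial>M) \<le> ennreal (exp c)"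
    and "0 < l" "0 \<le> b" "0 \<le> c"
  shows "(\<integral>\<^sup>+ s. \<integral>\<^sup>+ w. ennreal (F (\<pi> w) s + b) \<partial>P s \<partial>M)
           \<le> ennreal (1 / l) * (\<integral>\<^sup>+ s. KL_pmf (map_pmf \<pi> (P s)) Q \<partial>M) + ennreal (c / l + b)"
proof -
  define r where "r = c + l * b"
  have "0 \<le> r" using assms(8-10) by (simp add: r_def)
  define Z where "Z s = (\<integral>\<^sup>+ w. ennreal (F (\<pi> w) s + b) \<partial>P s)" for s
  define KL where "KL s = KL_pmf (map_pmf \<pi> (P s)) Q" for s
  define Y where "Y s = (\<integral>\<^sup>+ u. ennreal (exp (l * F u s - c)) \<partial>Q)" for s
  have Z_meas: "Z \<in> borel_measurable M"
    unfolding Z_def[abs_def] using F_meas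
    by (intro borel_measurable_nn_integral_pmf_kernel[OF \<open>countable T\<close> supp pmf_meas]) auto
  have Y_meas: "Y \<in> borel_measurable M"
    unfolding Y_def[abs_def] using F_meas Q
    by (intro borel_measurable_nn_integral_pmf_kernel[where T="set_pmf Q"]) auto
  have KL_meas: "KL \<in> borel_measurable M"
    unfolding KL_def[abs_def] by (rule borel_measurable_KL_pmf_kernel[OF \<open>countable T\<close> supp pmf_meas Q])
  have mgf_shifted: "integral\<^sup>N M (\<lambda>s. ennreal (exp (l * F u s - c))) \<le> 1" if "u \<in> set_pmf Q" for u
  proof -
    have "integral\<^sup>N M (\<lambda>s. ennreal (exp (l * F u s - c)))
        = ennreal (exp (- c)) * (\<integral>\<^sup>+ s. ennreal (exp (l * F u s)) \<partial>M)"
      using F_meas Q that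
      by (subst nn_integral_cmult[symmetric]) (auto simp: ennreal_mult'[symmetric] mult_exp_exp)
    also have "\<dots> \<le> ennreal (exp (- c)) * ennreal (exp c)"
      by (intro mult_left_mono mgf that) auto
    finally show ?thesis by (simp add: ennreal_mult'[symmetric] exp_minus)
  qed
  have "ennreal l * integral\<^sup>N M Z + 1 = (\<integral>\<^sup>+ s. ennreal l * Z s + 1 \<partial>M)"
    using Z_meas by (simp add: nn_integral_add nn_integral_cmult emeasure_space_1)
  also have "\<dots> \<le> (\<integral>\<^sup>+ s. KL s + Y s + ennreal r \<partial>M)"
    unfolding Z_def KL_def Y_def r_def using supp lower assms(8-10)
    by (intro nn_integral_mono KL_pmf_map_change_of_measure) auto
  also have "\<dots> = integral\<^sup>N M KL + integral\<^sup>N M Y + ennreal r"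
    using KL_meas Y_meas by (simp add: nn_integral_add emeasure_space_1)
  also have "\<dots> \<le> integral\<^sup>N M KL + 1 + ennreal r"
    unfolding Y_def using F_meas Q mgf_shifted
    by (intro add_mono order_refl nn_integral_pmf_mixture_le_1) auto
  finally have "ennreal l * integral\<^sup>N M Z \<le> integral\<^sup>N M KL + ennreal r"
    by (simp add: add.commute add.left_commute ennreal_add_left_cancel_le)
  then have "ennreal (1 / l) * (ennreal l * integral\<^sup>N M Z) \<le> ennreal (1 / l) * (integral\<^sup>N M KL + ennreal r)"
    by (rule mult_left_mono) simp
  moreover have "ennreal (1 / l) * ennreal l = 1" and "ennreal (1 / l) * ennreal r = ennreal (c / l + b)"
    using \<open>0 < l\<close> \<open>0 \<le> r\<close> by (simp_all add: ennreal_mult'[symmetric] r_def field_simps)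
  ultimately show ?thesis
    unfolding Z_def KL_def by (simp add: distrib_left mult.assoc[symmetric])
qed

section \<open>The layerwise decomposition of the generalisation gap\<close>

locale layerwise_pac_bayes = nn_activation \<phi> + prob_space \<mu>
  for \<phi> :: "nat \<Rightarrow> vec \<Rightarrow> vec" and \<mu> :: "(vec \<times> 'y) measure" +
  fixes d m n :: nat and \<delta> :: "nat \<Rightarrow> nat" and R Lc :: real
    and Mm :: "nat \<Rightarrow> mat" and \<alpha> :: "nat \<Rightarrow> real" and \<phi>o :: "nat \<Rightarrow> vec \<Rightarrow> vec"
    and lf :: "weights \<Rightarrow> vec \<times> 'y \<Rightarrow> real"
    and Ws :: "nat \<Rightarrow> mat set" and Q :: "nat \<Rightarrow> weights pmf"
  assumes dim0: "\<delta> 0 = m"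
    and R_pos: "R > 0"
    and centers: "\<And>j. j \<in> {1..d} \<Longrightarrow> Mm j \<in> nn_mats (\<delta> j) (\<delta> (j - 1))
                \<and> nn_specnorm (\<delta> j) (\<delta> (j - 1)) (Mm j) > 0 \<and> \<alpha> j > 0"
    and nonexpansive_output: "nonexpansive (\<delta> d) (\<phi>o (\<delta> d))"
    and Lc_pos: "Lc > 0"
    and loss_nonneg: "\<And>w z. 0 \<le> lf w z"
    and loss_lipschitz: "\<And>w w' x y. w \<in> nn_tuples d (\<lambda>j. nn_ball (\<delta> j) (\<delta> (j - 1)) (Mm j) (\<alpha> j))
          \<Longrightarrow> w' \<in> nn_tuples d (\<lambda>j. nn_ball (\<delta> j) (\<delta> (j - 1)) (Mm j) (\<alpha> j))
          \<Longrightarrow> nn_vnorm m x \<le> R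
          \<Longrightarrow> \<bar>lf w (x, y) - lf w' (x, y)\<bar>
                \<le> Lc * nn_vnorm (\<delta> d) (\<lambda>i. nn_net d \<delta> \<phi> \<phi>o w x i - nn_net d \<delta> \<phi> \<phi>o w' x i)"
    and support: "space \<mu> \<subseteq> {x. nn_vnorm m x \<le> R} \<times> UNIV"
    and loss_measurable: "\<And>w. w \<in> nn_tuples d (\<lambda>j. nn_ball (\<delta> j) (\<delta> (j - 1)) (Mm j) (\<alpha> j))
          \<Longrightarrow> lf w \<in> borel_measurable \<mu>"
    and n_pos: "n \<ge> 1"
    and weight_sets: "\<And>k. k \<in> {1..d} \<Longrightarrow> countable (Ws k)
          \<and> Ws k \<subseteq> nn_ball (\<delta> k) (\<delta> (k - 1)) (Mm k) (\<alpha> k)"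
    and prior_support: "\<And>k. k \<in> {1..d} \<Longrightarrow> set_pmf (Q k) \<subseteq> nn_prefix k ` nn_tuples d Ws"
begin

abbreviation "ball_tuples \<equiv> nn_tuples d (\<lambda>j. nn_ball (\<delta> j) (\<delta> (j - 1)) (Mm j) (\<alpha> j))"
abbreviation "weight_tuples \<equiv> nn_tuples d Ws"
abbreviation "center_norm j \<equiv> nn_specnorm (\<delta> j) (\<delta> (j - 1)) (Mm j)"
abbreviation "center_norm_prod \<equiv> \<Prod>j\<in>{1..d}. center_norm j"
abbreviation "samples \<equiv> sample_measure \<mu> n"

text \<open>\<open>hybrid k w\<close> is the tuple \<open>w\<^sup>(\<^sup>k\<^sup>)\<close> and \<open>incr_bound k\<close> the bound \<open>a\<^sub>k\<close> of the proof idea.\<close>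

definition hybrid :: "nat \<Rightarrow> weights \<Rightarrow> weights" where
  "hybrid k u = (\<lambda>j. if j \<in> {1..k} then u j else if j \<in> {1..d} then Mm j else (\<lambda>_ _. 0))"

definition center :: weights where
  "center = hybrid 0 (\<lambda>_ _ _. 0)"

definition in_balls :: "nat \<Rightarrow> weights \<Rightarrow> bool" where
  "in_balls k u \<longleftrightarrow> (\<forall>j\<in>{1..k}. u j \<in> nn_ball (\<delta> j) (\<delta> (j - 1)) (Mm j) (\<alpha> j))"

definition incr_bound :: "nat \<Rightarrow> real" where
  "incr_bound k = Lc * nn_beta \<alpha> k * center_norm_prod * R"

definition loss_incr :: "nat \<Rightarrow> weights \<Rightarrow> vec \<times> 'y \<Rightarrow> real" where
  "loss_incr k u z = lf (hybrid k u) z - lf (hybrid (k - 1) u) z"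

definition incr_gap :: "nat \<Rightarrow> weights \<Rightarrow> (nat \<Rightarrow> vec \<times> 'y) \<Rightarrow> real" where
  "incr_gap k u s = integral\<^sup>L \<mu> (loss_incr k u) - (\<Sum>i<n. loss_incr k u (s i)) / real n"

lemma center_norm_pos: "j \<in> {1..d} \<Longrightarrow> 0 < center_norm j"
  using centers by blast

lemma \<alpha>_pos: "j \<in> {1..d} \<Longrightarrow> 0 < \<alpha> j"
  using centers by blast

lemma center_norm_prod_pos: "0 < center_norm_prod"
  using center_norm_pos by (intro prod_pos) auto

lemma nn_beta_pos: "k \<in> {1..d} \<Longrightarrow> 0 < nn_beta \<alpha> k"
  using \<alpha>_pos by (simp add: nn_beta_def)

lemma incr_bound_pos: "k \<in> {1..d} \<Longrightarrow> 0 < incr_bound k"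
  unfolding incr_bound_def using Lc_pos R_pos nn_beta_pos center_norm_prod_pos by simp

lemma hybrid_0: "hybrid 0 u = center"
  by (simp add: hybrid_def center_def)

lemma hybrid_d: "w \<in> nn_tuples d X \<Longrightarrow> hybrid d w = w"
  by (auto simp: hybrid_def nn_tuples_def fun_eq_iff)

lemma hybrid_nn_prefix: "k \<le> k' \<Longrightarrow> hybrid k (nn_prefix k' w) = hybrid k w"
  by (auto simp: hybrid_def nn_prefix_def fun_eq_iff)

lemma in_balls_mono: "in_balls k u \<Longrightarrow> k' \<le> k \<Longrightarrow> in_balls k' u"
  by (auto simp: in_balls_def)

lemma in_balls_nn_prefix: "in_balls k w \<Longrightarrow> in_balls k (nn_prefix k w)"
  by (simp add: in_balls_def nn_prefix_def)

lemma in_balls_ball_tuple: "w \<in> ball_tuples \<Longrightarrow> k \<le> d \<Longrightarrow> in_balls k w"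
  by (auto simp: in_balls_def nn_tuples_def)

lemma weight_tuples_subset: "weight_tuples \<subseteq> ball_tuples"
  unfolding nn_tuples_def using weight_sets by blast

lemma hybrid_in_ball_tuples:
  assumes "k \<le> d" "in_balls k u"
  shows "hybrid k u \<in> ball_tuples"
proof -
  have "Mm j \<in> nn_ball (\<delta> j) (\<delta> (j - 1)) (Mm j) (\<alpha> j)" if "j \<in> {1..d}" for j
    using centers[OF that] by (intro center_in_nn_ball) auto
  then show ?thesis using assms by (auto simp: nn_tuples_def hybrid_def in_balls_def)
qed

lemma center_in_ball_tuples: "center \<in> ball_tuples"
  using hybrid_in_ball_tuples[of 0] by (simp add: hybrid_0 in_balls_def)

lemma countable_weight_tuples: "countable weight_tuples"
proof -
  have "weight_tuples \<subseteq> (\<lambda>f j. if j \<in> {1..d} then f j else (\<lambda>_ _. 0)) ` (PiE {1..d} Ws)"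
  proof
    fix w assume w: "w \<in> weight_tuples"
    then have "w = (\<lambda>j. if j \<in> {1..d} then restrict w {1..d} j else (\<lambda>_ _. 0))"
      by (auto simp: nn_tuples_def fun_eq_iff)
    moreover have "restrict w {1..d} \<in> PiE {1..d} Ws" using w by (auto simp: nn_tuples_def)
    ultimately show "w \<in> (\<lambda>f j. if j \<in> {1..d} then f j else (\<lambda>_ _. 0)) ` (PiE {1..d} Ws)" by blast
  qed
  moreover have "countable (PiE {1..d} Ws)" using weight_sets by (intro countable_PiE) auto
  ultimately show ?thesis by (blast intro: countable_subset countable_image)
qed

lemma nn_net_hybrid_diff_le:
  assumes k: "1 \<le> k" "k \<le> d" and u: "in_balls k u" and x: "nn_vnorm m x \<le> R"
  shows "nn_vnorm (\<delta> d) (\<lambda>i. nn_net d \<delta> \<phi> \<phi>o (hybrid k u) x i - nn_net d \<delta> \<phi> \<phi>o (hybrid (k - 1) u) x i)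
           \<le> nn_beta \<alpha> k * center_norm_prod * R"
proof -
  define A where "A j = (if j < k then (1 + \<alpha> j) * center_norm j else center_norm j)" for j
  define \<epsilon> where "\<epsilon> = \<alpha> k * center_norm k"
  have "k \<in> {1..d}" using k by auto
  have gain: "layer_gain_le \<delta> (hybrid k u) A j" if "j \<in> {1..d}-{k}" for j
  proof (cases "j < k")
    case True
    then have "hybrid k u j \<in> nn_ball (\<delta> j) (\<delta> (j - 1)) (Mm j) (\<alpha> j)"
      using that u by (auto simp: hybrid_def in_balls_def)
    then show ?thesis using True unfolding layer_gain_le_def A_def by (auto intro: nn_ball_mvmul_norm_le)
  next
    case False
    then have "hybrid k u j = Mm j" using that by (auto simp: hybrid_def)
    then show ?thesis using False unfolding layer_gain_le_def A_def by (auto intro: nn_mvmul_norm_le)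
  qed
  have "u k \<in> nn_ball (\<delta> k) (\<delta> (k - 1)) (Mm k) (\<alpha> k)" using u k by (auto simp: in_balls_def)
  then have spec: "nn_specnorm (\<delta> k) (\<delta> (k - 1)) (\<lambda>a b. u k a b - Mm k a b) \<le> \<epsilon>"
    by (simp add: nn_ball_def \<epsilon>_def)
  have "nn_vnorm (\<delta> k) (nn_mvmul (\<delta> k) (\<delta> (k - 1)) (\<lambda>a b. u k a b - Mm k a b) y)
      \<le> \<epsilon> * nn_vnorm (\<delta> (k - 1)) y" for y
    by (rule order_trans[OF nn_mvmul_norm_le mult_right_mono[OF spec nn_vnorm_nonneg]])
  moreover have "hybrid k u k = u k" "hybrid (k - 1) u k = Mm k"
    using \<open>k \<in> {1..d}\<close> by (auto simp: hybrid_def)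
  ultimately have eps: "\<forall>y. nn_vnorm (\<delta> k) (nn_mvmul (\<delta> k) (\<delta> (k - 1))
        (\<lambda>a b. hybrid k u k a b - hybrid (k - 1) u k a b) y) \<le> \<epsilon> * nn_vnorm (\<delta> (k - 1)) y"
    by simp
  have "nn_vnorm (\<delta> d) (\<lambda>i. nn_net d \<delta> \<phi> \<phi>o (hybrid k u) x i - nn_net d \<delta> \<phi> \<phi>o (hybrid (k - 1) u) x i)
      \<le> \<epsilon> * (\<Prod>j\<in>{1..d}-{k}. A j) * nn_vnorm (\<delta> 0) x"
  proof (rule nn_net_perturb_layer[where w="hybrid k u" and w'="hybrid (k - 1) u" and \<delta>=\<delta>
        and \<phi>o=\<phi>o and d=d and k=k, OF nonexpansive_output k _ _ _ eps])
    show "\<forall>j\<in>{1..d}-{k}. hybrid (k - 1) u j = hybrid k u j" by (auto simp: hybrid_def)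
    show "\<forall>j\<in>{1..d}-{k}. 0 \<le> A j"
      using \<alpha>_pos nn_specnorm_nonneg by (auto simp: A_def less_imp_le)
    show "0 \<le> \<epsilon>" using \<alpha>_pos[OF \<open>k \<in> {1..d}\<close>] nn_specnorm_nonneg by (simp add: \<epsilon>_def)
  qed (use gain in blast)
  also have "\<dots> \<le> (nn_beta \<alpha> k * center_norm_prod) * R"
  proof (rule mult_mono)
    show "\<epsilon> * (\<Prod>j\<in>{1..d}-{k}. A j) \<le> nn_beta \<alpha> k * center_norm_prod"
      unfolding \<epsilon>_def A_def using \<alpha>_pos nn_specnorm_nonneg
      by (intro perturbation_gain_le_nn_beta[OF k]) (auto intro: less_imp_le)
    show "0 \<le> nn_beta \<alpha> k * center_norm_prod"
      using nn_beta_pos[OF \<open>k \<in> {1..d}\<close>] center_norm_prod_pos by simp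
  qed (use x dim0 nn_vnorm_nonneg in auto)
  finally show ?thesis by simp
qed

lemma abs_loss_incr_le:
  assumes "k \<in> {1..d}" "in_balls k u" "z \<in> space \<mu>"
  shows "\<bar>loss_incr k u z\<bar> \<le> incr_bound k"
proof -
  obtain x y where z: "z = (x, y)" by (cases z)
  have x: "nn_vnorm m x \<le> R" using support assms(3) z by auto
  have "hybrid k u \<in> ball_tuples" "hybrid (k - 1) u \<in> ball_tuples"
    using assms hybrid_in_ball_tuples in_balls_mono[OF assms(2), of "k - 1"] by auto
  then have "\<bar>loss_incr k u z\<bar>
      \<le> Lc * nn_vnorm (\<delta> d) (\<lambda>i. nn_net d \<delta> \<phi> \<phi>o (hybrid k u) x i - nn_net d \<delta> \<phi> \<phi>o (hybrid (k - 1) u) x i)"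
    unfolding loss_incr_def z using x by (rule loss_lipschitz)
  also have "\<dots> \<le> Lc * (nn_beta \<alpha> k * center_norm_prod * R)"
    using nn_net_hybrid_diff_le[of k u x] assms x Lc_pos by (intro mult_left_mono) auto
  finally show ?thesis by (simp add: incr_bound_def mult_ac)
qed

lemma sum_loss_incr: "w \<in> nn_tuples d X \<Longrightarrow> (\<Sum>k\<in>{1..d}. loss_incr k w z) = lf w z - lf center z"
  unfolding loss_incr_def using sum_telescope''[of 0 d "\<lambda>k. lf (hybrid k w) z"]
  by (simp add: hybrid_d hybrid_0)

lemma loss_incr_measurable: "k \<in> {1..d} \<Longrightarrow> in_balls k u \<Longrightarrow> loss_incr k u \<in> borel_measurable \<mu>"
  unfolding loss_incr_def[abs_def]
  using hybrid_in_ball_tuples[of k u] hybrid_in_ball_tuples[of "k - 1" u] in_balls_mono[of k u "k - 1"]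
  by (intro borel_measurable_diff loss_measurable) auto

lemma loss_incr_integrable: "k \<in> {1..d} \<Longrightarrow> in_balls k u \<Longrightarrow> integrable \<mu> (loss_incr k u)"
  using abs_loss_incr_le loss_incr_measurable
  by (intro integrable_const_bound[where B="incr_bound k"]) (auto intro!: AE_I2)

lemma loss_incr_nn_prefix: "loss_incr k (nn_prefix k w) = loss_incr k w"
  by (simp add: loss_incr_def[abs_def] hybrid_nn_prefix)

lemma incr_gap_nn_prefix: "incr_gap k (nn_prefix k w) s = incr_gap k w s"
  by (simp add: incr_gap_def loss_incr_nn_prefix)

lemma incr_gap_measurable:
  assumes "k \<in> {1..d}" "in_balls k u"
  shows "incr_gap k u \<in> borel_measurable samples"
proof -
  have [measurable]: "loss_incr k u \<in> borel_measurable \<mu>"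
    using loss_incr_measurable[OF assms] .
  show ?thesis unfolding incr_gap_def[abs_def] by measurable
qed

lemma abs_incr_gap_le:
  assumes "k \<in> {1..d}" "in_balls k u" "s \<in> space samples"
  shows "\<bar>incr_gap k u s\<bar> \<le> 2 * incr_bound k"
proof -
  have mean: "\<bar>integral\<^sup>L \<mu> (loss_incr k u)\<bar> \<le> incr_bound k"
    using abs_loss_incr_le[OF assms(1,2)] loss_incr_integrable[OF assms(1,2)]
    by (intro order_trans[OF integral_abs_bound] integral_le_const) (auto intro!: AE_I2)
  have "\<bar>\<Sum>i<n. loss_incr k u (s i)\<bar> \<le> (\<Sum>i<n. \<bar>loss_incr k u (s i)\<bar>)"
    by (rule sum_abs)
  also have "\<dots> \<le> (\<Sum>i<n. incr_bound k)"
    using assms(3) by (intro sum_mono abs_loss_incr_le[OF assms(1,2)]) (auto simp: space_PiM)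
  finally have "\<bar>(\<Sum>i<n. loss_incr k u (s i)) / real n\<bar> \<le> incr_bound k"
    using n_pos by (simp add: field_simps)
  with mean show ?thesis unfolding incr_gap_def by linarith
qed

lemma incr_gap_mgf:
  assumes "k \<in> {1..d}" "in_balls k u" "0 < l"
  shows "(\<integral>\<^sup>+ s. ennreal (exp (l * incr_gap k u s)) \<partial>samples) \<le> ennreal (exp (l\<^sup>2 * (incr_bound k)\<^sup>2 / (2 * real n)))"
  unfolding incr_gap_def
  using abs_loss_incr_le[OF assms(1,2)] n_pos assms(3)
  by (intro Hoeffding_empirical_mean_mgf loss_incr_measurable[OF assms(1,2)]) auto

text \<open>The \<open>k\<close>-th generalisation gap depends on the first \<open>k\<close> layers only, so the change of measure
  is taken between the marginal of \<open>W\<^sub>1 \<dots> W\<^sub>k\<close> and the prior \<open>Q\<^sup>(\<^sup>k\<^sup>)\<close>.\<close>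

lemma posterior_incr_gap_le:
  assumes adm: "admissible d Ws \<mu> n P" and k: "k \<in> {1..d}" and "0 < l"
  shows "(\<integral>\<^sup>+ s. \<integral>\<^sup>+ w. ennreal (incr_gap k w s + 2 * incr_bound k) \<partial>P s \<partial>samples)
          \<le> ennreal (1 / l) * cond_KL \<mu> n k P (Q k)
             + ennreal (l * (incr_bound k)\<^sup>2 / (2 * real n) + 2 * incr_bound k)"
proof -
  interpret samples: prob_space samples by (rule prob_space_PiM) (rule prob_space_axioms)
  have in_balls_prefix: "in_balls k u" if "u \<in> nn_prefix k ` weight_tuples" for u
    using that k weight_tuples_subset in_balls_ball_tuple in_balls_nn_prefix by fastforce
  have "(\<integral>\<^sup>+ s. \<integral>\<^sup>+ w. ennreal (incr_gap k (nn_prefix k w) s + 2 * incr_bound k) \<partial>P s \<partial>samples)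
      \<le> ennreal (1 / l) * cond_KL \<mu> n k P (Q k)
         + ennreal (l\<^sup>2 * (incr_bound k)\<^sup>2 / (2 * real n) / l + 2 * incr_bound k)"
    unfolding cond_KL_def
  proof (rule samples.nn_integral_kernel_le_cond_KL[OF countable_weight_tuples])
    show "\<forall>s\<in>space samples. set_pmf (P s) \<subseteq> weight_tuples"
      using adm by (simp add: admissible_def)
    show "\<forall>w. (\<lambda>s. ennreal (pmf (P s) w)) \<in> borel_measurable samples"
      using adm by (simp add: admissible_def)
    show "set_pmf (Q k) \<subseteq> nn_prefix k ` weight_tuples" by (rule prior_support[OF k])
    show "incr_gap k u \<in> borel_measurable samples" if "u \<in> nn_prefix k ` weight_tuples" for u
      using incr_gap_measurable[OF k in_balls_prefix[OF that]] .
    show "0 \<le> incr_gap k (nn_prefix k w) s + 2 * incr_bound k"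
      if "w \<in> weight_tuples" "s \<in> space samples" for w s
      using abs_incr_gap_le[OF k in_balls_prefix[OF imageI[OF that(1)]] that(2)] by (auto simp: abs_le_iff)
    show "(\<integral>\<^sup>+ s. ennreal (exp (l * incr_gap k u s)) \<partial>samples) \<le> ennreal (exp (l\<^sup>2 * (incr_bound k)\<^sup>2 / (2 * real n)))"
      if "u \<in> set_pmf (Q k)" for u
      using incr_gap_mgf[OF k in_balls_prefix \<open>0 < l\<close>] that prior_support[OF k] by blast
  qed (use \<open>0 < l\<close> incr_bound_pos[OF k] in auto)
  moreover have "l\<^sup>2 * (incr_bound k)\<^sup>2 / (2 * real n) / l = l * (incr_bound k)\<^sup>2 / (2 * real n)"
    using \<open>0 < l\<close> by (simp add: power2_eq_square)
  ultimately show ?thesis by (simp add: incr_gap_nn_prefix)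
qed

lemma integrable_loss_transfer:
  assumes "w \<in> ball_tuples" "w' \<in> ball_tuples" "integrable \<mu> (lf w)"
  shows "integrable \<mu> (lf w')"
proof -
  have bound: "\<bar>lf v z - lf center z\<bar> \<le> (\<Sum>k\<in>{1..d}. incr_bound k)"
    if "v \<in> ball_tuples" "z \<in> space \<mu>" for v z
  proof -
    have "\<bar>lf v z - lf center z\<bar> = \<bar>\<Sum>k\<in>{1..d}. loss_incr k v z\<bar>"
      using sum_loss_incr[OF that(1)] by simp
    also have "\<dots> \<le> (\<Sum>k\<in>{1..d}. incr_bound k)"
      using that by (intro order_trans[OF sum_abs] sum_mono abs_loss_incr_le in_balls_ball_tuple) auto
    finally show ?thesis .
  qed
  have "\<bar>lf w' z - lf w z\<bar> \<le> 2 * (\<Sum>k\<in>{1..d}. incr_bound k)" if "z \<in> space \<mu>" for z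
    using bound[OF assms(1) that] bound[OF assms(2) that] by linarith
  then have "integrable \<mu> (\<lambda>z. lf w' z - lf w z)"
    using assms loss_measurable
    by (intro integrable_const_bound[where B="2 * (\<Sum>k\<in>{1..d}. incr_bound k)"]) (auto intro!: AE_I2)
  then have "integrable \<mu> (\<lambda>z. lf w z + (lf w' z - lf w z))"
    using assms(3) by (rule Bochner_Integration.integrable_add[rotated])
  then show ?thesis by simp
qed

lemma integrable_loss_center:
  assumes "w \<in> ball_tuples" "pop_loss lf \<mu> w < \<infinity>"
  shows "integrable \<mu> (lf center)"
proof -
  have "integrable \<mu> (lf w)"
    using assms loss_measurable loss_nonneg by (intro integrableI_nonneg) (auto simp: pop_loss_def)
  then show ?thesis
    using assms(1) center_in_ball_tuples by (rule integrable_loss_transfer[rotated 2])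
qed

lemma admissible_return_pmf: "w \<in> weight_tuples \<Longrightarrow> admissible d Ws \<mu> n (\<lambda>_. return_pmf w)"
  by (simp add: admissible_def)

lemma gibbs_objective_return_pmf:
  assumes "w \<in> weight_tuples"
  shows "gibbs_objective C d \<alpha> \<gamma> Q lf \<mu> n (\<lambda>_. return_pmf w) = pop_loss lf \<mu> w
     + ennreal (C / sqrt (real n))
       * (\<Sum>k\<in>{1..d}. ennreal (nn_beta \<alpha> k * \<gamma> k) * neglog (pmf (Q k) (nn_prefix k w)))"
proof -
  interpret samples: prob_space samples by (rule prob_space_PiM) (rule prob_space_axioms)
  have "w \<in> ball_tuples" using assms weight_tuples_subset by blast
  then have "exp_emp_loss lf \<mu> n (\<lambda>_. return_pmf w) = pop_loss lf \<mu> w"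
    using n_pos by (simp add: exp_emp_loss_def nn_integral_emp_loss loss_measurable loss_nonneg)
  moreover have "cond_KL \<mu> n k (\<lambda>_. return_pmf w) (Q k) = neglog (pmf (Q k) (nn_prefix k w))" for k
    by (simp add: cond_KL_def KL_pmf_return_pmf samples.emeasure_space_1)
  ultimately show ?thesis by (simp add: gibbs_objective_def)
qed

context
  assumes center_integrable: "integrable \<mu> (lf center)"
begin

lemma pop_loss_eq_integral:
  assumes "w \<in> ball_tuples"
  shows "pop_loss lf \<mu> w = ennreal (integral\<^sup>L \<mu> (lf w))"
proof -
  have "integrable \<mu> (lf w)"
    using integrable_loss_transfer[OF center_in_ball_tuples assms center_integrable] .
  then show ?thesis
    unfolding pop_loss_def using loss_nonneg by (intro nn_integral_eq_integral) auto
qed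

lemma loss_gap_telescope:
  assumes w: "w \<in> weight_tuples"
  shows "integral\<^sup>L \<mu> (lf w) - emp_loss lf n w s
       = integral\<^sup>L \<mu> (lf center) - emp_loss lf n center s + (\<Sum>k\<in>{1..d}. incr_gap k w s)"
proof -
  have w_ball: "w \<in> ball_tuples" using w weight_tuples_subset by blast
  have "integral\<^sup>L \<mu> (lf w) - integral\<^sup>L \<mu> (lf center) = integral\<^sup>L \<mu> (\<lambda>z. lf w z - lf center z)"
    using integrable_loss_transfer[OF center_in_ball_tuples w_ball center_integrable] center_integrable
    by simp
  also have "\<dots> = integral\<^sup>L \<mu> (\<lambda>z. \<Sum>k\<in>{1..d}. loss_incr k w z)"
    using sum_loss_incr[OF w] by simp
  also have "\<dots> = (\<Sum>k\<in>{1..d}. integral\<^sup>L \<mu> (loss_incr k w))"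
    using w_ball by (intro Bochner_Integration.integral_sum loss_incr_integrable in_balls_ball_tuple) auto
  finally have mean: "integral\<^sup>L \<mu> (lf w) - integral\<^sup>L \<mu> (lf center)
      = (\<Sum>k\<in>{1..d}. integral\<^sup>L \<mu> (loss_incr k w))" .
  have "emp_loss lf n w s - emp_loss lf n center s = (\<Sum>i<n. \<Sum>k\<in>{1..d}. loss_incr k w (s i)) / real n"
    using sum_loss_incr[OF w] by (simp add: emp_loss_def sum_subtractf diff_divide_distrib)
  also have "\<dots> = (\<Sum>k\<in>{1..d}. (\<Sum>i<n. loss_incr k w (s i)) / real n)"
    by (simp add: sum.swap[of _ "{..<n}"] sum_divide_distrib)
  finally have empirical: "emp_loss lf n w s - emp_loss lf n center s
      = (\<Sum>k\<in>{1..d}. (\<Sum>i<n. loss_incr k w (s i)) / real n)" .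
  show ?thesis
    using mean empirical by (simp add: incr_gap_def sum_subtractf)
qed

text \<open>Shifting the \<open>k\<close>-th gap by its bound \<open>2 a\<^sub>k\<close> makes every summand nonnegative, so the
  identity can be integrated in \<open>ennreal\<close>.\<close>

lemma loss_decomposition:
  assumes w: "w \<in> weight_tuples" and s: "s \<in> space samples"
  shows "pop_loss lf \<mu> w + ennreal (emp_loss lf n center s) + ennreal (\<Sum>k\<in>{1..d}. 2 * incr_bound k)
       = ennreal (emp_loss lf n w s) + pop_loss lf \<mu> center
         + (\<Sum>k\<in>{1..d}. ennreal (incr_gap k w s + 2 * incr_bound k))"
proof -
  have w_ball: "w \<in> ball_tuples" using w weight_tuples_subset by blast
  have gap_nonneg: "0 \<le> incr_gap k w s + 2 * incr_bound k" if "k \<in> {1..d}" for k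
    using abs_incr_gap_le[OF that in_balls_ball_tuple[OF w_ball] s] that by (simp add: abs_le_iff)
  have B_nonneg: "0 \<le> (\<Sum>k\<in>{1..d}. 2 * incr_bound k)"
    using incr_bound_pos by (intro sum_nonneg) (auto intro: less_imp_le)
  have L_nonneg: "0 \<le> integral\<^sup>L \<mu> (lf w')" for w'
    using loss_nonneg by (simp add: integral_nonneg_AE)
  have emp_nonneg: "0 \<le> emp_loss lf n w' s" for w'
    by (simp add: emp_loss_def sum_nonneg loss_nonneg)
  have "pop_loss lf \<mu> w + ennreal (emp_loss lf n center s) + ennreal (\<Sum>k\<in>{1..d}. 2 * incr_bound k)
      = ennreal (integral\<^sup>L \<mu> (lf w) + emp_loss lf n center s + (\<Sum>k\<in>{1..d}. 2 * incr_bound k))"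
    using w_ball L_nonneg[of w] emp_nonneg[of center] B_nonneg by (simp add: pop_loss_eq_integral ennreal_plus)
  also have "\<dots> = ennreal (emp_loss lf n w s + integral\<^sup>L \<mu> (lf center)
      + (\<Sum>k\<in>{1..d}. incr_gap k w s + 2 * incr_bound k))"
    unfolding sum.distrib using loss_gap_telescope[OF w, of s] by (intro arg_cong[where f=ennreal]) linarith
  also have "\<dots> = ennreal (emp_loss lf n w s) + pop_loss lf \<mu> center
      + (\<Sum>k\<in>{1..d}. ennreal (incr_gap k w s + 2 * incr_bound k))"
  proof -
    have "(\<Sum>k\<in>{1..d}. ennreal (incr_gap k w s + 2 * incr_bound k))
        = ennreal (\<Sum>k\<in>{1..d}. incr_gap k w s + 2 * incr_bound k)"
      using gap_nonneg by (intro sum_ennreal) auto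
    moreover have "0 \<le> (\<Sum>k\<in>{1..d}. incr_gap k w s + 2 * incr_bound k)"
      using gap_nonneg by (intro sum_nonneg) auto
    ultimately show ?thesis
      using L_nonneg[of center] emp_nonneg[of w]
      by (simp add: pop_loss_eq_integral[OF center_in_ball_tuples] ennreal_plus)
  qed
  finally show ?thesis .
qed

lemma admissible_nn_integral_measurable:
  assumes "admissible d Ws \<mu> n P" and "\<And>w. w \<in> weight_tuples \<Longrightarrow> h w \<in> borel_measurable samples"
  shows "(\<lambda>s. \<integral>\<^sup>+ w. h w s \<partial>P s) \<in> borel_measurable samples"
  using assms by (intro borel_measurable_nn_integral_pmf_kernel[OF countable_weight_tuples])
    (auto simp: admissible_def)

lemma risk_decomposition:
  assumes adm: "admissible d Ws \<mu> n P"
  shows "risk lf \<mu> n P + pop_loss lf \<mu> center + ennreal (\<Sum>k\<in>{1..d}. 2 * incr_bound k)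
       = exp_emp_loss lf \<mu> n P + pop_loss lf \<mu> center
         + (\<Sum>k\<in>{1..d}. \<integral>\<^sup>+ s. \<integral>\<^sup>+ w. ennreal (incr_gap k w s + 2 * incr_bound k) \<partial>P s \<partial>samples)"
proof -
  interpret samples: prob_space samples by (rule prob_space_PiM) (rule prob_space_axioms)
  define G where "G k s = (\<integral>\<^sup>+ w. ennreal (incr_gap k w s + 2 * incr_bound k) \<partial>P s)" for k s
  have G_meas: "G k \<in> borel_measurable samples" if "k \<in> {1..d}" for k
  proof -
    have [measurable]: "incr_gap k w \<in> borel_measurable samples" if "w \<in> weight_tuples" for w
      using that \<open>k \<in> {1..d}\<close> weight_tuples_subset
      by (intro incr_gap_measurable in_balls_ball_tuple) auto
    show ?thesis unfolding G_def[abs_def] by (intro admissible_nn_integral_measurable[OF adm]) measurable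
  qed
  have emp_meas: "(\<lambda>s. ennreal (emp_loss lf n w s)) \<in> borel_measurable samples" if "w \<in> ball_tuples" for w
    using loss_measurable[OF that] unfolding emp_loss_def by measurable
  have "risk lf \<mu> n P + pop_loss lf \<mu> center + ennreal (\<Sum>k\<in>{1..d}. 2 * incr_bound k)
      = (\<integral>\<^sup>+ s. (\<integral>\<^sup>+ w. pop_loss lf \<mu> w \<partial>P s) + ennreal (emp_loss lf n center s)
                  + ennreal (\<Sum>k\<in>{1..d}. 2 * incr_bound k) \<partial>samples)"
    using admissible_nn_integral_measurable[OF adm, of "\<lambda>w s. pop_loss lf \<mu> w"] emp_meas[OF center_in_ball_tuples]
      nn_integral_emp_loss[of lf center n, OF loss_measurable[OF center_in_ball_tuples] loss_nonneg] n_pos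
    by (simp add: risk_def nn_integral_add samples.emeasure_space_1)
  also have "\<dots> = (\<integral>\<^sup>+ s. (\<integral>\<^sup>+ w. ennreal (emp_loss lf n w s) \<partial>P s) + pop_loss lf \<mu> center
                      + (\<Sum>k\<in>{1..d}. G k s) \<partial>samples)"
  proof (intro nn_integral_cong)
    fix s assume s: "s \<in> space samples"
    define B where "B = ennreal (\<Sum>k\<in>{1..d}. 2 * incr_bound k)"
    have "(\<integral>\<^sup>+ w. pop_loss lf \<mu> w \<partial>P s) + ennreal (emp_loss lf n center s) + B
        = (\<integral>\<^sup>+ w. pop_loss lf \<mu> w + ennreal (emp_loss lf n center s) + B \<partial>P s)"
      by (simp add: nn_integral_add measure_pmf.emeasure_space_1)
    also have "\<dots> = (\<integral>\<^sup>+ w. ennreal (emp_loss lf n w s) + pop_loss lf \<mu> center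
                       + (\<Sum>k\<in>{1..d}. ennreal (incr_gap k w s + 2 * incr_bound k)) \<partial>P s)"
      unfolding B_def using adm s
      by (intro nn_integral_cong_AE AE_pmfI loss_decomposition) (auto simp: admissible_def)
    also have "\<dots> = (\<integral>\<^sup>+ w. ennreal (emp_loss lf n w s) \<partial>P s) + pop_loss lf \<mu> center + (\<Sum>k\<in>{1..d}. G k s)"
      by (simp add: G_def nn_integral_add nn_integral_sum measure_pmf.emeasure_space_1)
    finally show "(\<integral>\<^sup>+ w. pop_loss lf \<mu> w \<partial>P s) + ennreal (emp_loss lf n center s) + B
        = (\<integral>\<^sup>+ w. ennreal (emp_loss lf n w s) \<partial>P s) + pop_loss lf \<mu> center + (\<Sum>k\<in>{1..d}. G k s)" .
  qed
  also have "\<dots> = exp_emp_loss lf \<mu> n P + pop_loss lf \<mu> center + (\<Sum>k\<in>{1..d}. integral\<^sup>N samples (G k))"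
    using admissible_nn_integral_measurable[OF adm, of "\<lambda>w s. ennreal (emp_loss lf n w s)"]
      emp_meas weight_tuples_subset G_meas nn_integral_sum[of "{1..d}" G samples]
    by (simp add: exp_emp_loss_def nn_integral_add borel_measurable_sum samples.emeasure_space_1 subset_iff)
  finally show ?thesis by (simp add: G_def[abs_def])
qed

lemma risk_le_exp_emp_loss_plus_KL:
  assumes adm: "admissible d Ws \<mu> n P" and l: "\<And>k. k \<in> {1..d} \<Longrightarrow> 0 < l k"
  shows "risk lf \<mu> n P \<le> exp_emp_loss lf \<mu> n P
     + (\<Sum>k\<in>{1..d}. ennreal (1 / l k) * cond_KL \<mu> n k P (Q k)
          + ennreal (l k * (incr_bound k)\<^sup>2 / (2 * real n)))"
proof -
  define B where "B = (\<Sum>k\<in>{1..d}. 2 * incr_bound k)"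
  define V where "V k = ennreal (1 / l k) * cond_KL \<mu> n k P (Q k)
                        + ennreal (l k * (incr_bound k)\<^sup>2 / (2 * real n))" for k
  have "risk lf \<mu> n P + pop_loss lf \<mu> center + ennreal B
      = exp_emp_loss lf \<mu> n P + pop_loss lf \<mu> center
         + (\<Sum>k\<in>{1..d}. \<integral>\<^sup>+ s. \<integral>\<^sup>+ w. ennreal (incr_gap k w s + 2 * incr_bound k) \<partial>P s \<partial>samples)"
    unfolding B_def by (rule risk_decomposition[OF adm])
  also have "\<dots> \<le> exp_emp_loss lf \<mu> n P + pop_loss lf \<mu> center + (\<Sum>k\<in>{1..d}. V k + ennreal (2 * incr_bound k))"
  proof (intro add_mono order_refl sum_mono)
    fix k assume k: "k \<in> {1..d}"
    from posterior_incr_gap_le[OF adm k l[OF k]]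
    show "(\<integral>\<^sup>+ s. \<integral>\<^sup>+ w. ennreal (incr_gap k w s + 2 * incr_bound k) \<partial>P s \<partial>samples)
        \<le> V k + ennreal (2 * incr_bound k)"
      using l[OF k] incr_bound_pos[OF k] by (simp add: V_def ennreal_plus add.assoc)
  qed
  also have "\<dots> = (exp_emp_loss lf \<mu> n P + (\<Sum>k\<in>{1..d}. V k)) + (pop_loss lf \<mu> center + ennreal B)"
  proof -
    have "(\<Sum>k\<in>{1..d}. ennreal (2 * incr_bound k)) = ennreal B"
      unfolding B_def using incr_bound_pos by (intro sum_ennreal) (simp add: less_imp_le)
    then show ?thesis by (simp add: sum.distrib add_ac)
  qed
  finally have "(pop_loss lf \<mu> center + ennreal B) + risk lf \<mu> n P
      \<le> (pop_loss lf \<mu> center + ennreal B) + (exp_emp_loss lf \<mu> n P + (\<Sum>k\<in>{1..d}. V k))"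
    by (simp add: add_ac)
  then show ?thesis
    using pop_loss_eq_integral[OF center_in_ball_tuples]
    by (simp add: V_def ennreal_add_left_cancel_le)
qed

text \<open>The choice \<open>\<lambda>\<^sub>k = 1 / (K \<beta>\<^sub>k \<gamma>\<^sub>k)\<close> with \<open>K = C / \<surd>n\<close> turns the relative entropies into
  the penalty of the objective and the Hoeffding terms into \<open>K \<beta>\<^sub>k / (4 \<gamma>\<^sub>k)\<close>.\<close>

lemma risk_le_gibbs_objective:
  assumes adm: "admissible d Ws \<mu> n P" and \<gamma>: "\<And>k. k \<in> {1..d} \<Longrightarrow> 0 < \<gamma> k"
  defines "C \<equiv> Lc * center_norm_prod * R * sqrt 2"
  shows "risk lf \<mu> n P \<le> gibbs_objective C d \<alpha> \<gamma> Q lf \<mu> n P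
           + ennreal (C / sqrt (real n)) * (\<Sum>k\<in>{1..d}. ennreal (nn_beta \<alpha> k) * ennreal (1 / (4 * \<gamma> k)))"
proof -
  define K where "K = C / sqrt (real n)"
  have "0 < K" using Lc_pos R_pos center_norm_prod_pos n_pos by (simp add: K_def C_def)
  define l where "l k = 1 / (K * (nn_beta \<alpha> k * \<gamma> k))" for k
  have l_pos: "0 < l k" if "k \<in> {1..d}" for k
    using \<open>0 < K\<close> nn_beta_pos[OF that] \<gamma>[OF that] by (simp add: l_def)
  have KL_weight: "ennreal (1 / l k) = ennreal K * ennreal (nn_beta \<alpha> k * \<gamma> k)" if "k \<in> {1..d}" for k
    using \<open>0 < K\<close> nn_beta_pos[OF that] \<gamma>[OF that] by (simp add: l_def ennreal_mult')
  have Hoeffding_term: "ennreal (l k * (incr_bound k)\<^sup>2 / (2 * real n))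
      = ennreal K * (ennreal (nn_beta \<alpha> k) * ennreal (1 / (4 * \<gamma> k)))" if k: "k \<in> {1..d}" for k
  proof -
    have "sqrt (real n) * sqrt (real n) = real n" "sqrt 2 * sqrt 2 = (2::real)" by simp_all
    then have "l k * (incr_bound k)\<^sup>2 / (2 * real n) = K * (nn_beta \<alpha> k * (1 / (4 * \<gamma> k)))"
      using Lc_pos R_pos center_norm_prod_pos n_pos nn_beta_pos[OF k] \<gamma>[OF k]
      by (simp add: l_def K_def C_def incr_bound_def field_simps power2_eq_square)
    then show ?thesis
      using \<open>0 < K\<close> nn_beta_pos[OF k] \<gamma>[OF k] by (simp add: ennreal_mult'[symmetric])
  qed
  have "risk lf \<mu> n P \<le> exp_emp_loss lf \<mu> n P
     + (\<Sum>k\<in>{1..d}. ennreal (1 / l k) * cond_KL \<mu> n k P (Q k)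
          + ennreal (l k * (incr_bound k)\<^sup>2 / (2 * real n)))"
    by (rule risk_le_exp_emp_loss_plus_KL[OF adm l_pos])
  also have "\<dots> = gibbs_objective C d \<alpha> \<gamma> Q lf \<mu> n P
           + ennreal K * (\<Sum>k\<in>{1..d}. ennreal (nn_beta \<alpha> k) * ennreal (1 / (4 * \<gamma> k)))"
    using KL_weight Hoeffding_term
    by (simp add: gibbs_objective_def K_def sum.distrib sum_distrib_left mult.assoc add.assoc)
  finally show ?thesis unfolding K_def .
qed

end

theorem risk_le_pop_loss_plus_penalty:
  defines "C \<equiv> Lc * center_norm_prod * R * sqrt 2"
  assumes adm: "admissible d Ws \<mu> n P" and \<gamma>: "\<And>k. k \<in> {1..d} \<Longrightarrow> 0 < \<gamma> k"
    and P_min: "\<And>P'. admissible d Ws \<mu> n P'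
                  \<Longrightarrow> gibbs_objective C d \<alpha> \<gamma> Q lf \<mu> n P \<le> gibbs_objective C d \<alpha> \<gamma> Q lf \<mu> n P'"
    and w: "w \<in> weight_tuples"
  shows "risk lf \<mu> n P \<le> pop_loss lf \<mu> w + ennreal (C / sqrt (real n))
           * (\<Sum>k\<in>{1..d}. ennreal (nn_beta \<alpha> k)
                * (ennreal (\<gamma> k) * neglog (pmf (Q k) (nn_prefix k w)) + ennreal (1 / (4 * \<gamma> k))))"
proof (cases "pop_loss lf \<mu> w = \<infinity>")
  case True
  then show ?thesis by simp
next
  case False
  then have "integrable \<mu> (lf center)"
    using w weight_tuples_subset by (intro integrable_loss_center) (auto simp: less_top)
  define K where "K = ennreal (C / sqrt (real n))"
  have "risk lf \<mu> n P \<le> gibbs_objective C d \<alpha> \<gamma> Q lf \<mu> n P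
      + K * (\<Sum>k\<in>{1..d}. ennreal (nn_beta \<alpha> k) * ennreal (1 / (4 * \<gamma> k)))"
    unfolding K_def C_def by (rule risk_le_gibbs_objective[OF \<open>integrable \<mu> (lf center)\<close> adm \<gamma>])
  also have "\<dots> \<le> gibbs_objective C d \<alpha> \<gamma> Q lf \<mu> n (\<lambda>_. return_pmf w)
      + K * (\<Sum>k\<in>{1..d}. ennreal (nn_beta \<alpha> k) * ennreal (1 / (4 * \<gamma> k)))"
    by (intro add_right_mono P_min admissible_return_pmf w)
  also have "\<dots> = pop_loss lf \<mu> w + K * (\<Sum>k\<in>{1..d}. ennreal (nn_beta \<alpha> k)
      * (ennreal (\<gamma> k) * neglog (pmf (Q k) (nn_prefix k w)) + ennreal (1 / (4 * \<gamma> k))))"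
  proof -
    have "ennreal (nn_beta \<alpha> k * \<gamma> k) = ennreal (nn_beta \<alpha> k) * ennreal (\<gamma> k)" if "k \<in> {1..d}" for k
      using nn_beta_pos[OF that] by (simp add: ennreal_mult')
    then show ?thesis
      unfolding gibbs_objective_return_pmf[OF w] K_def[symmetric]
      by (simp add: distrib_left sum.distrib sum_distrib_left mult.assoc add.assoc)
  qed
  finally show ?thesis unfolding K_def .
qed

end

theorem theorem2:
  fixes d m n :: nat and \<delta> :: "nat \<Rightarrow> nat" and R Lc :: real
    and Mm :: "nat \<Rightarrow> mat" and \<alpha> \<gamma> :: "nat \<Rightarrow> real"
    and \<phi> \<phi>o :: "nat \<Rightarrow> vec \<Rightarrow> vec"
    and lf :: "weights \<Rightarrow> vec \<times> 'y \<Rightarrow> real" and \<mu> :: "(vec \<times> 'y) measure"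
    and Ws :: "nat \<Rightarrow> mat set" and Q :: "nat \<Rightarrow> weights pmf"
    and Pstar :: "(nat \<Rightarrow> vec \<times> 'y) \<Rightarrow> weights pmf" and what :: weights
  assumes d2: "d \<ge> 2"
    and dims: "\<forall>j\<in>{1..d}. \<delta> j > 0" and dim0: "\<delta> 0 = m" and mpos: "m > 0"
    and Rpos: "R > 0"
    and Mj: "\<forall>j\<in>{1..d}. Mm j \<in> nn_mats (\<delta> j) (\<delta> (j - 1))
                \<and> nn_specnorm (\<delta> j) (\<delta> (j - 1)) (Mm j) > 0 \<and> \<alpha> j > 0"
    and phi_lip: "\<forall>k x y. nn_vnorm k (\<lambda>i. \<phi> k x i - \<phi> k y i) \<le> nn_vnorm k (\<lambda>i. x i - y i)"
    and phi0: "\<forall>k. \<forall>i<k. \<phi> k (\<lambda>_. 0) i = 0"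
    and phio: "\<phi>o = (\<lambda>k x. x) \<or> \<phi>o = nn_softmax"
    and Lpos: "Lc > 0"
    and loss_nonneg: "\<forall>w z. 0 \<le> lf w z"
    and loss_lip: "\<forall>w\<in>nn_tuples d (\<lambda>j. nn_ball (\<delta> j) (\<delta> (j - 1)) (Mm j) (\<alpha> j)).
                   \<forall>w'\<in>nn_tuples d (\<lambda>j. nn_ball (\<delta> j) (\<delta> (j - 1)) (Mm j) (\<alpha> j)).
                   \<forall>x y. nn_vnorm m x \<le> R \<longrightarrow>
                     \<bar>lf w (x, y) - lf w' (x, y)\<bar>
                       \<le> Lc * nn_vnorm (\<delta> d) (\<lambda>i. nn_net d \<delta> \<phi> \<phi>o w x i - nn_net d \<delta> \<phi> \<phi>o w' x i)"
    and prob: "prob_space \<mu>"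
    and supp: "space \<mu> \<subseteq> {x. nn_vnorm m x \<le> R} \<times> UNIV"
    and loss_meas: "\<forall>w\<in>nn_tuples d (\<lambda>j. nn_ball (\<delta> j) (\<delta> (j - 1)) (Mm j) (\<alpha> j)).
                      (\<lambda>z. lf w z) \<in> borel_measurable \<mu>"
    and npos: "n \<ge> 1"
    and Ws: "\<forall>k\<in>{1..d}. countable (Ws k) \<and> Ws k \<subseteq> nn_ball (\<delta> k) (\<delta> (k - 1)) (Mm k) (\<alpha> k)"
    and Qsupp: "\<forall>k\<in>{1..d}. set_pmf (Q k) \<subseteq> nn_prefix k ` nn_tuples d Ws"
    and gpos: "\<forall>k\<in>{1..d}. \<gamma> k > 0"
    and Pstar_adm: "admissible d Ws \<mu> n Pstar"
    and Pstar_min: "\<forall>P. admissible d Ws \<mu> n P \<longrightarrow>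
        gibbs_objective (Lc * (\<Prod>j\<in>{1..d}. nn_specnorm (\<delta> j) (\<delta> (j - 1)) (Mm j)) * R * sqrt 2)
           d \<alpha> \<gamma> Q lf \<mu> n Pstar
        \<le> gibbs_objective (Lc * (\<Prod>j\<in>{1..d}. nn_specnorm (\<delta> j) (\<delta> (j - 1)) (Mm j)) * R * sqrt 2)
           d \<alpha> \<gamma> Q lf \<mu> n P"
    and what_in: "what \<in> nn_tuples d Ws"
    and what_min: "\<forall>w\<in>nn_tuples d Ws. pop_loss lf \<mu> what \<le> pop_loss lf \<mu> w"
  shows "risk lf \<mu> n Pstar \<le> (INF w\<in>nn_tuples d Ws. pop_loss lf \<mu> w)
     + ennreal (Lc * (\<Prod>j\<in>{1..d}. nn_specnorm (\<delta> j) (\<delta> (j - 1)) (Mm j)) * R * sqrt 2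
                / sqrt (real n))
       * (\<Sum>k\<in>{1..d}. ennreal (nn_beta \<alpha> k)
            * (ennreal (\<gamma> k) * neglog (pmf (Q k) (nn_prefix k what)) + ennreal (1 / (4 * \<gamma> k))))"
proof -
  interpret layerwise_pac_bayes \<phi> \<mu> d m n \<delta> R Lc Mm \<alpha> \<phi>o lf Ws Q
  proof (intro layerwise_pac_bayes.intro nn_activation.intro layerwise_pac_bayes_axioms.intro prob)
    show "nonexpansive (\<delta> d) (\<phi>o (\<delta> d))"
      using phio nonexpansive_id nonexpansive_nn_softmax by auto
    show "0 \<le> lf w z" for w z
      using loss_nonneg by blast
  qed (use phi_lip phi0 dim0 Rpos Mj Lpos loss_lip supp loss_meas npos Ws Qsupp in
        \<open>simp_all add: nonexpansive_def\<close>)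
  show ?thesis
  proof (rule order_trans[OF risk_le_pop_loss_plus_penalty[OF Pstar_adm _ _ what_in] add_right_mono])
    show "pop_loss lf \<mu> what \<le> (INF w\<in>nn_tuples d Ws. pop_loss lf \<mu> w)"
      using what_min by (intro INF_greatest) auto
  qed (use gpos Pstar_min in auto)
qed
end
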